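(* Let $\mu\in\mathcal M$ be not a point mass, $G=G_\mu$, $E_\pm=E_\pm(\mu)$, and let $n$ be a positive integer with $n\ge\tau(\mu)$. Then $\mathsf A(u)=nG^{[-1]}_\mu(u)+\frac{1-n}{u}$ has a minimal real positive critical point $\mathsf z\in(0,G(E_+))$, with $\mathsf A''(\mathsf z)>0$ and $G^{[-1]}_\mu(\mathsf z)-E_+\ge4(E_+-E_-)$. Furthermore $\mathsf z=G_{\mu^{\boxplus n}}(E_+(\mu^{\boxplus n}))$ and $\lim_{z\searrow E_+(\mu^{\boxplus n})}G'_{\mu^{\boxplus n}}(z)=-\infty$.
   Context: $\mathcal M$: compactly supported Borel probability measures on $\mathbb R$; $G_\mu(z)=\int\frac{d\mu(x)}{z-x}$; $E_\pm(\mu)=\sup/\inf\operatorname{supp}\mu$; $G(E_+)=\lim_{x\searrow E_+}G(x)$. $x(\mu)=4(E_+(\mu)-E_-(\mu))+E_+(\mu)$ and $\tau(\mu)=\big(1+G_\mu(x(\mu))^2/G'_\mu(x(\mu))\big)^{-1}$. $\mu^{\boxplus n}$ is the $n$-fold free additive convolution. $G^{[-1]}_\mu$ is defined on $\mathfrak O_\mu$: the set of $u\in\mathbb C$ for which there is $z_u\notin\operatorname{supp}\mu$ with $u=G_\mu(z_u)$, $G'_\mu(z_u)\ne0$, and a simple closed curve $\gamma\ni z_u$ positively oriented around $\operatorname{supp}\mu$ along which $\operatorname{Re}(zu)-\int\log|z-x|d\mu(x)$ is strictly smaller than at $z_u$ for all $z\in\gamma\setminus\{z_u\}$; such $z_u$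 is unique and $G^{[-1]}_\mu(u):=z_u$ (on $(0,G(E_+))$ this is the inverse of the decreasing bijection $G:(E_+,\infty)\to(0,G(E_+))$). *)

theory Defs
  imports "HOL-Probability.Probability"
begin

definition supp :: "real measure \<Rightarrow> real set" where
  "supp \<mu> = {x. \<forall>e>0. emeasure \<mu> (ball x e) > 0}"

definition in_M :: "real measure \<Rightarrow> bool" where
  "in_M \<mu> \<longleftrightarrow> prob_space \<mu> \<and> sets \<mu> = sets borel \<and> compact (supp \<mu>)"

definition Eplus :: "real measure \<Rightarrow> real" where
  "Eplus \<mu> = Sup (supp \<mu>)"

definition Eminus :: "real measure \<Rightarrow> real" where
  "Eminus \<mu> = Inf (supp \<mu>)"

text \<open>Cauchy transform restricted to the real axis.\<close>
definition Gr :: "real measure \<Rightarrow> real \<Rightarrow> real" where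
  "Gr \<mu> x = (LINT t|\<mu>. 1 / (x - t))"

text \<open>G(E_+) as the (possibly infinite) right limit.\<close>
definition GEp :: "real measure \<Rightarrow> ereal" where
  "GEp \<mu> = Lim (at_right (Eplus \<mu>)) (\<lambda>x. ereal (Gr \<mu> x))"

text \<open>Inverse of the decreasing bijection G : (E_+,\<infinity>) \<rightarrow> (0, G(E_+)).\<close>
definition Ginv :: "real measure \<Rightarrow> real \<Rightarrow> real" where
  "Ginv \<mu> u = (THE y. Eplus \<mu> < y \<and> Gr \<mu> y = u)"

definition xpt :: "real measure \<Rightarrow> real" where
  "xpt \<mu> = 4 * (Eplus \<mu> - Eminus \<mu>) + Eplus \<mu>"

definition tau :: "real measure \<Rightarrow> real" where
  "tau \<mu> = inverse (1 + (Gr \<mu> (xpt \<mu>))\<^sup>2 / deriv (Gr \<mu>) (xpt \<mu>))"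

text \<open>\<nu> is the n-fold free additive convolution power of \<mu>: \<nu> \<in> M and the
  R-transform relation R_\<nu> = n R_\<mu>, i.e. K_\<nu>(u) = n K_\<mu>(u) + (1-n)/u, holds
  in the form K_\<nu>(G_\<nu>(x)) = x for all sufficiently large real x.\<close>
definition is_free_conv_power :: "real measure \<Rightarrow> nat \<Rightarrow> real measure \<Rightarrow> bool" where
  "is_free_conv_power \<mu> n \<nu> \<longleftrightarrow> in_M \<nu> \<and>
     (\<exists>R. \<forall>x>R. real n * Ginv \<mu> (Gr \<nu> x) + (1 - real n) / Gr \<nu> x = x)"

definition Afun :: "real measure \<Rightarrow> nat \<Rightarrow> real \<Rightarrow> real" where
  "Afun \<mu> n u = real n * Ginv \<mu> u + (1 - real n) / u"

end

theory Submission
  imports Defs "HOL-Complex_Analysis.Complex_Analysis" "HOL-Real_Asymp.Real_Asymp"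
begin

(*
  For y > E+ write G, G2, G3 for the integrals of (y - t)^-m, m = 1, 2, 3, and
  Phi(y) = n y + (1 - n)/G(y), so that A(G(y)) = Phi(y) and A'(G(y)) = -p(y) / (G2(y) G(y)^2)
  with p = n G^2 - (n - 1) G2 = G^2 Phi'.  The hypothesis n >= tau(mu) says exactly p(x(mu)) <= 0,
  while p > 0 far out, so p has a largest zero ystar >= x(mu); then z = G(ystar) is the first positive
  critical point of A, and A''(z) > 0 by the Cauchy-Schwarz inequality G2^2 < G G3.

  The R-transform relation for nu gives the subordination identity G_nu(Phi(y)) = G(y) for large y,
  and analytic continuation extends it to every y > ystar with Phi(y) > E+(nu).  This pins down
  E+(nu) = Phi(ystar): if E+(nu) were smaller, G_nu would be differentiable at Phi(ystar) although
  Phi'(ystar) = 0; if it were larger, G o Phi^-1 would continue G_nu holomorphically across E+(nu),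
  which is impossible because nu charges every neighbourhood of E+(nu).  Hence G_nu(E+(nu)) = z,
  and G_nu' = -G2 G^2 / p o Phi^-1 tends to -infinity at E+(nu).
*)

section \<open>Compactly supported probability measures\<close>

lemma in_M_D:
  assumes "in_M \<mu>"
  shows "prob_space \<mu>" "sets \<mu> = sets borel" "space \<mu> = UNIV" "compact (supp \<mu>)"
  using assms unfolding in_M_def by (auto dest: sets_eq_imp_space_eq)

lemma AE_in_supp:
  assumes sets: "sets \<mu> = sets borel"
  shows "AE t in \<mu>. t \<in> supp \<mu>"
proof -
  define \<F> where "\<F> = {ball x e | x e. 0 < e \<and> emeasure \<mu> (ball x e) = 0}"
  have cover: "- supp \<mu> \<subseteq> \<Union>\<F>"
  proof
    fix x assume "x \<in> - supp \<mu>"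
    then obtain e where "0 < e" "emeasure \<mu> (ball x e) = 0"
      unfolding supp_def by (auto simp: not_less)
    then have "ball x e \<in> \<F>" "x \<in> ball x e" unfolding \<F>_def by auto
    then show "x \<in> \<Union>\<F>" by (rule UnionI)
  qed
  obtain \<F>' where \<F>': "\<F>' \<subseteq> \<F>" "countable \<F>'" "\<Union>\<F>' = \<Union>\<F>"
    by (rule Lindelof[of \<F>]) (auto simp: \<F>_def)
  have "(\<Union>B\<in>\<F>'. B) \<in> null_sets \<mu>"
  proof (rule null_sets_UN'[OF \<F>'(2)])
    fix B assume "B \<in> \<F>'"
    then obtain x e where "B = ball x e" "emeasure \<mu> (ball x e) = 0"
      using \<F>'(1) unfolding \<F>_def by blast
    then show "B \<in> null_sets \<mu>" by (simp add: null_sets_def sets)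
  qed
  moreover have "{t \<in> space \<mu>. t \<notin> supp \<mu>} \<subseteq> (\<Union>B\<in>\<F>'. B)"
    using cover \<F>'(3) by auto
  ultimately show ?thesis by (rule AE_I')
qed

lemma supp_nonempty:
  assumes "in_M \<mu>"
  shows "supp \<mu> \<noteq> {}"
proof
  assume "supp \<mu> = {}"
  then have "AE t in \<mu>. False" using AE_in_supp[OF in_M_D(2)[OF assms]] by simp
  then show False using prob_space.AE_False[OF in_M_D(1)[OF assms]] by simp
qed

lemma
  assumes "in_M \<mu>"
  shows Eplus_in_supp: "Eplus \<mu> \<in> supp \<mu>"
    and supp_subset_Eminus_Eplus: "supp \<mu> \<subseteq> {Eminus \<mu>..Eplus \<mu>}"
proof -
  have "closed (supp \<mu>)" "bounded (supp \<mu>)" "supp \<mu> \<noteq> {}"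
    using in_M_D(4)[OF assms] supp_nonempty[OF assms] by (auto intro: compact_imp_closed compact_imp_bounded)
  then show "Eplus \<mu> \<in> supp \<mu>" "supp \<mu> \<subseteq> {Eminus \<mu>..Eplus \<mu>}"
    unfolding Eplus_def Eminus_def
    by (auto intro!: closed_contains_Sup cInf_lower cSup_upper
                     bounded_imp_bdd_above bounded_imp_bdd_below)
qed

lemma AE_Eminus_Eplus:
  assumes "in_M \<mu>"
  shows "AE t in \<mu>. Eminus \<mu> \<le> t \<and> t \<le> Eplus \<mu>"
  using AE_in_supp[OF in_M_D(2)[OF assms]]
  by eventually_elim (use supp_subset_Eminus_Eplus[OF assms] in auto)

lemma eq_return_if_AE_eq:
  assumes "prob_space \<mu>" "sets \<mu> = sets borel" "AE t in \<mu>. t = c"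
  shows "\<mu> = return borel c"
proof (rule measure_eqI)
  interpret prob_space \<mu> by fact
  show "sets \<mu> = sets (return borel c)" using assms(2) by simp
  fix A assume A: "A \<in> sets \<mu>"
  show "emeasure \<mu> A = emeasure (return borel c) A"
  proof (cases "c \<in> A")
    case True
    then have "emeasure \<mu> A = 1" using A assms(3) by (intro emeasure_eq_1_AE) auto
    then show ?thesis using A True assms(2) by simp
  next
    case False
    then have "AE x in \<mu>. x \<notin> A" using assms(3) by (auto elim!: AE_mp)
    then have "emeasure \<mu> A = 0"
      using A AE_iff_measurable[of A \<mu> "\<lambda>x. x \<notin> A"] assms(2) by (simp add: sets_eq_imp_space_eq)
    then show ?thesis using A False assms(2) by simp
  qed
qed

lemma Eminus_less_Eplus:
  assumes "in_M \<mu>" "\<nexists>a. \<mu> = return borel a"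
  shows "Eminus \<mu> < Eplus \<mu>"
proof (rule ccontr)
  assume "\<not> Eminus \<mu> < Eplus \<mu>"
  then have "AE t in \<mu>. t = Eplus \<mu>" using AE_Eminus_Eplus[OF assms(1)] by (auto elim!: AE_mp)
  then show False using eq_return_if_AE_eq in_M_D[OF assms(1)] assms(2) by blast
qed

section \<open>Cauchy transforms\<close>

lemma has_field_derivative_inverse_power:
  fixes z c :: "'a::real_normed_field"
  assumes "z \<noteq> c"
  shows "((\<lambda>w. 1 / (w - c) ^ m) has_field_derivative - of_nat m / (z - c) ^ Suc m) (at z)"
proof -
  have "((\<lambda>w. inverse ((w - c) ^ m)) has_field_derivative
          - (of_nat m * (z - c) ^ (m - 1) * inverse ((z - c) ^ m * (z - c) ^ m))) (at z)"
    using assms by (auto intro!: derivative_eq_intros)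
  moreover have "of_nat m * (z - c) ^ (m - 1) * inverse ((z - c) ^ m * (z - c) ^ m) = of_nat m / (z - c) ^ Suc m"
  proof (cases m)
    case (Suc k)
    have "(z - c) ^ m * (z - c) ^ m = (z - c) ^ k * (z - c) ^ Suc m"
      unfolding power_add[symmetric] Suc by simp
    then show ?thesis using assms unfolding Suc by (simp add: divide_inverse inverse_mult_distrib)
  qed simp
  ultimately show ?thesis by (simp add: inverse_eq_divide)
qed

lemma norm_difference_quotient_le:
  fixes f :: "'a::real_normed_field \<Rightarrow> 'a"
  assumes "convex S" "w \<in> S" "w0 \<in> S" "w \<noteq> w0"
    and "\<And>w. w \<in> S \<Longrightarrow> (f has_field_derivative f' w) (at w)"
    and "\<And>w. w \<in> S \<Longrightarrow> norm (f' w) \<le> C"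
  shows "norm ((f w - f w0) / (w - w0)) \<le> C"
proof -
  have "norm (f w - f w0) \<le> C * norm (w - w0)"
    by (rule field_differentiable_bound[OF assms(1)])
       (use assms in \<open>auto intro: has_field_derivative_at_within\<close>)
  then show ?thesis using assms(4) by (simp add: norm_divide divide_le_eq)
qed

lemma has_field_derivative_integral:
  fixes f :: "'a::{real_normed_field,banach,second_countable_topology} \<Rightarrow> real \<Rightarrow> 'a"
  assumes M: "finite_measure M"
   and K: "AE t in M. t \<in> K"
   and S: "open S" "w0 \<in> S" "convex S"
   and der: "\<And>t w. t \<in> K \<Longrightarrow> w \<in> S \<Longrightarrow> ((\<lambda>w. f w t) has_field_derivative f' w t) (at w)"
   and bnd: "\<And>t w. t \<in> K \<Longrightarrow> w \<in> S \<Longrightarrow> norm (f' w t) \<le> C"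
   and meas: "\<And>w. (\<lambda>t. f w t) \<in> borel_measurable M" "(\<lambda>t. f' w0 t) \<in> borel_measurable M"
   and int: "\<And>w. w \<in> S \<Longrightarrow> integrable M (\<lambda>t. f w t)"
  shows "((\<lambda>w. LINT t|M. f w t) has_field_derivative (LINT t|M. f' w0 t)) (at w0)"
  unfolding has_field_derivative_iff
proof (subst tendsto_at_iff_sequentially, intro allI impI)
  interpret finite_measure M by fact
  fix X :: "nat \<Rightarrow> 'a" assume X: "\<forall>i. X i \<in> UNIV - {w0}" "X \<longlonglongrightarrow> w0"
  have evS: "eventually (\<lambda>i. X i \<in> S) sequentially"
    using X(2) S(1,2) by (rule topological_tendstoD)
  define s where "s i t = (if X i \<in> S then (f (X i) t - f w0 t) / (X i - w0) else 0)" for i t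
  have "(\<lambda>i. integral\<^sup>L M (s i)) \<longlonglongrightarrow> integral\<^sup>L M (\<lambda>t. f' w0 t)"
  proof (rule integral_dominated_convergence[where w="\<lambda>_. C"])
    show "(\<lambda>t. f' w0 t) \<in> borel_measurable M" by fact
    show "s i \<in> borel_measurable M" for i
      unfolding s_def using meas by (cases "X i \<in> S") auto
    show "integrable M (\<lambda>_. C)" by simp
    show "AE t in M. (\<lambda>i. s i t) \<longlonglongrightarrow> f' w0 t"
      using K
    proof eventually_elim
      case (elim t)
      note t = this
      have "((\<lambda>w. (f w t - f w0 t) / (w - w0)) \<longlongrightarrow> f' w0 t) (at w0)"
        using der[OF t S(2)] unfolding has_field_derivative_iff .
      then have "((\<lambda>w. (f w t - f w0 t) / (w - w0)) \<circ> X) \<longlonglongrightarrow> f' w0 t"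
        using X by (subst (asm) tendsto_at_iff_sequentially) auto
      moreover have "eventually (\<lambda>i. ((\<lambda>w. (f w t - f w0 t) / (w - w0)) \<circ> X) i = s i t) sequentially"
        using evS by eventually_elim (simp add: s_def)
      ultimately show "(\<lambda>i. s i t) \<longlonglongrightarrow> f' w0 t" by (rule Lim_transform_eventually)
    qed
    show "AE t in M. norm (s i t) \<le> C" for i
      using K
    proof eventually_elim
      case (elim t)
      note t = this
      have "0 \<le> C" using bnd[OF t S(2)] norm_ge_zero order_trans by blast
      then show "norm (s i t) \<le> C"
        using norm_difference_quotient_le[OF S(3) _ S(2) _ der[OF t] bnd[OF t], of "X i"] X(1)
        by (auto simp: s_def)
    qed
  qed
  moreover have "eventually (\<lambda>i. integral\<^sup>L M (s i) =
      ((\<lambda>y. ((LINT t|M. f y t) - (LINT t|M. f w0 t)) / (y - w0)) \<circ> X) i) sequentially"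
    using evS
  proof eventually_elim
    case (elim i)
    have "s i = (\<lambda>t. (f (X i) t - f w0 t) / (X i - w0))" using elim by (intro ext) (simp add: s_def)
    then show ?case
      using int[OF elim] int[OF S(2)] by (simp add: integral_diff integral_divide_zero)
  qed
  ultimately show
    "((\<lambda>y. ((LINT t|M. f y t) - (LINT t|M. f w0 t)) / (y - w0)) \<circ> X) \<longlonglongrightarrow> (LINT t|M. f' w0 t)"
    by (rule Lim_transform_eventually)
qed

definition supp_hull :: "real measure \<Rightarrow> 'a::real_normed_algebra_1 set" where
  "supp_hull \<mu> = of_real ` {Eminus \<mu>..Eplus \<mu>}"

text \<open>The kernel is raised to a power \<open>m\<close> because the derivatives of \<open>G\<^sub>\<mu>\<close> are of this form;
  the definition is polymorphic so that the real and the complex transforms are the same constant.\<close>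
definition cauchy_transform ::
    "real measure \<Rightarrow> nat \<Rightarrow> 'a::{real_normed_field,banach,second_countable_topology} \<Rightarrow> 'a" where
  "cauchy_transform \<mu> m w = (LINT t|\<mu>. 1 / (w - of_real t) ^ m)"

lemma compact_supp_hull: "compact (supp_hull \<mu> :: 'a::real_normed_algebra_1 set)"
  unfolding supp_hull_def by (intro compact_continuous_image continuous_intros) auto

lemma supp_hull_nonempty: "in_M \<mu> \<Longrightarrow> (supp_hull \<mu> :: 'a::real_normed_algebra_1 set) \<noteq> {}"
  unfolding supp_hull_def using supp_subset_Eminus_Eplus Eplus_in_supp by fastforce

lemma open_Compl_supp_hull: "open (- (supp_hull \<mu> :: 'a::real_normed_algebra_1 set))"
  by (rule open_Compl[OF compact_imp_closed[OF compact_supp_hull]])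

lemma of_real_notin_supp_hull: "x > Eplus \<mu> \<Longrightarrow> (of_real x :: 'a::real_normed_algebra_1) \<notin> supp_hull \<mu>"
  by (auto simp: supp_hull_def)

lemma half_infdist_supp_hull_le:
  fixes w w' :: "'a::real_normed_field"
  assumes "w' \<in> ball w (infdist w (supp_hull \<mu>) / 2)" "t \<in> {Eminus \<mu>..Eplus \<mu>}"
  shows "infdist w (supp_hull \<mu>) / 2 \<le> norm (w' - of_real t)"
proof -
  have "of_real t \<in> (supp_hull \<mu> :: 'a set)" using assms(2) by (auto simp: supp_hull_def)
  then have "infdist w (supp_hull \<mu>) \<le> dist w (of_real t)" by (rule infdist_le)
  also have "\<dots> \<le> dist w w' + dist w' (of_real t)" by (rule dist_triangle)
  finally show ?thesis using assms(1) by (auto simp: dist_norm)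
qed

lemma infdist_supp_hull_pos:
  fixes w :: "'a::real_normed_algebra_1"
  assumes "in_M \<mu>" "w \<notin> supp_hull \<mu>"
  shows "infdist w (supp_hull \<mu>) > 0"
  using infdist_pos_not_in_closed[OF compact_imp_closed[OF compact_supp_hull] supp_hull_nonempty] assms
  by blast

lemma cauchy_kernel_measurable:
  assumes "in_M \<mu>"
  shows "(\<lambda>t. c / (w - of_real t :: 'a::{real_normed_field,banach,second_countable_topology}) ^ m)
           \<in> borel_measurable \<mu>"
proof -
  have "(\<lambda>t. c / (w - of_real t :: 'a) ^ m) \<in> borel_measurable borel" by measurable
  then show ?thesis using measurable_cong_sets in_M_D(2)[OF assms] by blast
qed

lemma integrable_cauchy_kernel:
  fixes w :: "'a::{real_normed_field,banach,second_countable_topology}"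
  assumes "in_M \<mu>" "w \<notin> supp_hull \<mu>"
  shows "integrable \<mu> (\<lambda>t. c / (w - of_real t) ^ m)"
proof -
  interpret prob_space \<mu> using in_M_D(1)[OF assms(1)] .
  define d where "d = infdist w (supp_hull \<mu>) / 2"
  have d: "d > 0" using infdist_supp_hull_pos[OF assms] by (simp add: d_def)
  show ?thesis
  proof (rule integrable_const_bound[where B="norm c / d ^ m"])
    show "AE t in \<mu>. norm (c / (w - of_real t) ^ m) \<le> norm c / d ^ m"
      using AE_Eminus_Eplus[OF assms(1)]
    proof eventually_elim
      case (elim t)
      have "d \<le> norm (w - of_real t)"
        unfolding d_def using half_infdist_supp_hull_le[of w w \<mu> t] elim d by (auto simp: d_def)
      then have "d ^ m \<le> norm (w - of_real t) ^ m" using d by (intro power_mono) auto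
      moreover have "0 < d ^ m" using d by simp
      ultimately show ?case by (simp add: norm_divide norm_power divide_left_mono)
    qed
  qed (rule cauchy_kernel_measurable[OF assms(1)])
qed

lemma cauchy_transform_has_field_derivative:
  fixes w :: "'a::{real_normed_field,banach,second_countable_topology}"
  assumes "in_M \<mu>" "w \<notin> supp_hull \<mu>"
  shows "(cauchy_transform \<mu> m has_field_derivative - of_nat m * cauchy_transform \<mu> (Suc m) w) (at w)"
proof -
  interpret prob_space \<mu> using in_M_D(1)[OF assms(1)] .
  define d where "d = infdist w (supp_hull \<mu>) / 2"
  have d: "d > 0" using infdist_supp_hull_pos[OF assms] by (simp add: d_def)
  have near: "d \<le> norm (w' - of_real t)" if "w' \<in> ball w d" "t \<in> {Eminus \<mu>..Eplus \<mu>}" for w' t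
    using half_infdist_supp_hull_le[of w' w \<mu> t] that by (simp add: d_def)
  have notin: "w' \<notin> supp_hull \<mu>" if "w' \<in> ball w d" for w'
    using near[OF that] d by (force simp: supp_hull_def)
  have "((\<lambda>w. LINT t|\<mu>. 1 / (w - of_real t) ^ m) has_field_derivative
          (LINT t|\<mu>. - of_nat m / (w - of_real t) ^ Suc m)) (at w)"
  proof (rule has_field_derivative_integral[where K="{Eminus \<mu>..Eplus \<mu>}" and S="ball w d"
                                              and C="of_nat m / d ^ Suc m"])
    show "finite_measure \<mu>" by unfold_locales
    show "AE t in \<mu>. t \<in> {Eminus \<mu>..Eplus \<mu>}" using AE_Eminus_Eplus[OF assms(1)] by auto
    show "open (ball w d)" "w \<in> ball w d" "convex (ball w d)" using d by auto
    show "(\<lambda>t. - of_nat m / (w - of_real t) ^ Suc m) \<in> borel_measurable \<mu>"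
      by (rule cauchy_kernel_measurable[OF assms(1)])
    fix t w' assume t: "t \<in> {Eminus \<mu>..Eplus \<mu>}" and w': "w' \<in> ball w d"
    have "w' \<noteq> of_real t" using near[OF w' t] d by auto
    then show "((\<lambda>w. 1 / (w - of_real t) ^ m) has_field_derivative - of_nat m / (w' - of_real t) ^ Suc m) (at w')"
      by (rule has_field_derivative_inverse_power)
    have "d ^ Suc m \<le> norm (w' - of_real t) ^ Suc m" using near[OF w' t] d by (intro power_mono) auto
    moreover have "0 < d ^ Suc m" using d by (simp del: power_Suc)
    ultimately show "norm (- of_nat m / (w' - of_real t) ^ Suc m) \<le> of_nat m / d ^ Suc m"
      by (simp add: norm_divide norm_power divide_left_mono del: power_Suc)
  qed (auto intro: cauchy_kernel_measurable[OF assms(1)] integrable_cauchy_kernel[OF assms(1) notin])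
  moreover have "(LINT t|\<mu>. - of_nat m / (w - of_real t) ^ Suc m) = - of_nat m * cauchy_transform \<mu> (Suc m) w"
    unfolding cauchy_transform_def divide_inverse by simp
  ultimately show ?thesis unfolding cauchy_transform_def[abs_def] by simp
qed

lemma cauchy_transform_of_real:
  "cauchy_transform \<mu> m (complex_of_real x) = complex_of_real (cauchy_transform \<mu> m x)"
proof -
  have "(\<lambda>t. 1 / (complex_of_real x - complex_of_real t) ^ m) = (\<lambda>t. complex_of_real (1 / (x - t) ^ m))"
    by (simp add: of_real_diff[symmetric] del: of_real_diff)
  then show ?thesis unfolding cauchy_transform_def of_real_eq_id id_def by (rule ssubst) (rule integral_complex_of_real)
qed

lemma holomorphic_cauchy_transform:
  "in_M \<mu> \<Longrightarrow> (cauchy_transform \<mu> m :: complex \<Rightarrow> complex) holomorphic_on - supp_hull \<mu>"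
  using cauchy_transform_has_field_derivative by (subst holomorphic_on_open[OF open_Compl_supp_hull]) blast

lemma Gr_eq_cauchy_transform: "Gr \<mu> = cauchy_transform \<mu> 1"
  by (simp add: Gr_def cauchy_transform_def fun_eq_iff)

lemma Gr_cauchy_transform: "Gr \<mu> x = cauchy_transform \<mu> 1 x"
  by (simp add: Gr_eq_cauchy_transform)

lemma cauchy_transform_0: "in_M \<mu> \<Longrightarrow> cauchy_transform \<mu> 0 w = 1"
  using prob_space.prob_space[OF in_M_D(1)] by (simp add: cauchy_transform_def)

lemma cauchy_transform_real: "cauchy_transform \<mu> m (x::real) = (LINT t|\<mu>. 1 / (x - t) ^ m)"
  by (simp add: cauchy_transform_def)

lemma integrable_cauchy_kernel_real:
  assumes "in_M \<mu>" "x > Eplus \<mu>"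
  shows "integrable \<mu> (\<lambda>t. 1 / (x - t) ^ m)"
  using integrable_cauchy_kernel[OF assms(1) of_real_notin_supp_hull[where 'a=real, OF assms(2)], of 1 m]
  by (simp add: of_real_eq_id)

lemma AE_less_if_Eplus_less:
  assumes "in_M \<mu>" "x > Eplus \<mu>"
  shows "AE t in \<mu>. t < x"
  using AE_Eminus_Eplus[OF assms(1)] by eventually_elim (use assms(2) in auto)

lemma cauchy_transform_bounds:
  assumes "in_M \<mu>" "x > Eplus \<mu>"
  shows "1 / (x - Eminus \<mu>) ^ m \<le> cauchy_transform \<mu> m x" "cauchy_transform \<mu> m x \<le> 1 / (x - Eplus \<mu>) ^ m"
proof -
  interpret prob_space \<mu> using in_M_D(1)[OF assms(1)] .
  note int = integrable_cauchy_kernel_real[OF assms]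
  have "(LINT t|\<mu>. 1 / (x - Eminus \<mu>) ^ m) \<le> (LINT t|\<mu>. 1 / (x - t) ^ m)"
  proof (rule integral_mono_AE)
    show "AE t in \<mu>. 1 / (x - Eminus \<mu>) ^ m \<le> 1 / (x - t) ^ m"
      using AE_Eminus_Eplus[OF assms(1)]
      by eventually_elim (use assms(2) in \<open>auto intro!: frac_le power_mono\<close>)
  qed (use int in auto)
  then show "1 / (x - Eminus \<mu>) ^ m \<le> cauchy_transform \<mu> m x" by (simp add: cauchy_transform_real prob_space)
  have "(LINT t|\<mu>. 1 / (x - t) ^ m) \<le> (LINT t|\<mu>. 1 / (x - Eplus \<mu>) ^ m)"
  proof (rule integral_mono_AE)
    show "AE t in \<mu>. 1 / (x - t) ^ m \<le> 1 / (x - Eplus \<mu>) ^ m"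
      using AE_Eminus_Eplus[OF assms(1)]
      by eventually_elim (use assms(2) in \<open>auto intro!: frac_le power_mono\<close>)
  qed (use int in auto)
  then show "cauchy_transform \<mu> m x \<le> 1 / (x - Eplus \<mu>) ^ m" by (simp add: cauchy_transform_real prob_space)
qed

lemma cauchy_transform_pos:
  assumes "in_M \<mu>" "x > Eplus \<mu>"
  shows "cauchy_transform \<mu> m x > 0"
proof -
  have "Eminus \<mu> \<le> Eplus \<mu>" using supp_subset_Eminus_Eplus[OF assms(1)] Eplus_in_supp[OF assms(1)] by auto
  then have "0 < 1 / (x - Eminus \<mu>) ^ m" using assms by simp
  then show ?thesis using cauchy_transform_bounds(1)[OF assms, of m] by linarith
qed

text \<open>Cauchy--Schwarz for the kernels \<open>(x - t)\<^sup>-\<^sup>m\<close>: the integral of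
  \<open>(x - t)\<^sup>-\<^sup>m ((x - t)\<^sup>-\<^sup>1 - l)\<^sup>2\<close> with \<open>l = C\<^sub>m\<^sub>+\<^sub>1 / C\<^sub>m\<close> equals
  \<open>C\<^sub>m\<^sub>+\<^sub>2 - C\<^sub>m\<^sub>+\<^sub>1\<^sup>2 / C\<^sub>m\<close>, and it vanishes only for a point mass.\<close>
lemma cauchy_transform_sq_less:
  assumes "in_M \<mu>" "\<nexists>a. \<mu> = return borel a" "x > Eplus \<mu>"
  shows "(cauchy_transform \<mu> (Suc m) x)\<^sup>2 < cauchy_transform \<mu> m x * cauchy_transform \<mu> (Suc (Suc m)) x"
proof -
  interpret prob_space \<mu> using in_M_D(1)[OF assms(1)] .
  let ?C = "\<lambda>k. cauchy_transform \<mu> k x"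
  define k where "k j t = 1 / (x - t) ^ j" for j t
  define l where "l = ?C (Suc m) / ?C m"
  define f where "f t = k m t * (k 1 t - l)\<^sup>2" for t
  have C0: "?C m > 0" "?C (Suc m) > 0" using cauchy_transform_pos[OF assms(1,3)] by auto
  have f_eq: "f = (\<lambda>t. k (Suc (Suc m)) t - (2 * l) * k (Suc m) t + l\<^sup>2 * k m t)"
    unfolding f_def k_def power_one_over[symmetric] by (simp add: fun_eq_iff power2_eq_square algebra_simps)
  have int: "integrable \<mu> (k j)" for j
    unfolding k_def by (rule integrable_cauchy_kernel_real[OF assms(1,3)])
  have int_f: "integrable \<mu> f" unfolding f_eq by (intro int Bochner_Integration.integrable_add
      Bochner_Integration.integrable_diff integrable_mult_right)
  have "integral\<^sup>L \<mu> f = ?C (Suc (Suc m)) - 2 * l * ?C (Suc m) + l\<^sup>2 * ?C m"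
    unfolding f_eq cauchy_transform_real k_def[symmetric] using int by simp
  also have "\<dots> = ?C (Suc (Suc m)) - (?C (Suc m))\<^sup>2 / ?C m"
    using C0 by (simp add: l_def field_simps power2_eq_square)
  finally have I: "integral\<^sup>L \<mu> f = ?C (Suc (Suc m)) - (?C (Suc m))\<^sup>2 / ?C m" .
  have f_nonneg: "AE t in \<mu>. 0 \<le> f t"
    using AE_less_if_Eplus_less[OF assms(1,3)] by eventually_elim (simp add: f_def k_def)
  have "integral\<^sup>L \<mu> f \<noteq> 0"
  proof
    assume "integral\<^sup>L \<mu> f = 0"
    then have "AE t in \<mu>. f t = 0" using integral_nonneg_eq_0_iff_AE[OF int_f f_nonneg] by simp
    then have "AE t in \<mu>. t = x - 1 / l"
      using AE_less_if_Eplus_less[OF assms(1,3)]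
      by eventually_elim (use C0 in \<open>auto simp: f_def k_def l_def field_simps\<close>)
    then show False using eq_return_if_AE_eq in_M_D[OF assms(1)] assms(2) by blast
  qed
  moreover have "integral\<^sup>L \<mu> f \<ge> 0" by (rule integral_nonneg_AE[OF f_nonneg])
  ultimately have "(?C (Suc m))\<^sup>2 / ?C m < ?C (Suc (Suc m))" using I by linarith
  then show ?thesis using C0 by (simp add: divide_less_eq mult.commute)
qed

lemma cauchy_transform_has_real_derivative:
  assumes "in_M \<mu>" "x > Eplus \<mu>"
  shows "(cauchy_transform \<mu> m has_real_derivative - real m * cauchy_transform \<mu> (Suc m) x) (at x)"
  using cauchy_transform_has_field_derivative[OF assms(1) of_real_notin_supp_hull[where 'a=real, OF assms(2)], of m]
  by (simp add: of_real_eq_id)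

lemma isCont_cauchy_transform:
  assumes "in_M \<mu>" "x > Eplus \<mu>"
  shows "isCont (cauchy_transform \<mu> m :: real \<Rightarrow> real) x"
  using cauchy_transform_has_real_derivative[OF assms] by (rule DERIV_isCont)

lemma cauchy_transform_strict_decreasing:
  assumes "in_M \<mu>" "Eplus \<mu> < x" "x < y"
  shows "cauchy_transform \<mu> (Suc m) y < cauchy_transform \<mu> (Suc m) (x::real)"
proof (rule DERIV_neg_imp_decreasing[OF assms(3)])
  fix z assume "x \<le> z" "z \<le> y"
  then have z: "z > Eplus \<mu>" using assms by auto
  have "- real (Suc m) * cauchy_transform \<mu> (Suc (Suc m)) z < 0"
    using cauchy_transform_pos[OF assms(1) z] by (simp add: mult_neg_pos del: of_nat_Suc)
  then show "\<exists>D. (cauchy_transform \<mu> (Suc m) has_real_derivative D) (at z) \<and> D < 0"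
    using cauchy_transform_has_real_derivative[OF assms(1) z] by blast
qed

lemma cauchy_transform_tendsto_0:
  assumes "in_M \<mu>"
  shows "((cauchy_transform \<mu> (Suc m) :: real \<Rightarrow> real) \<longlongrightarrow> 0) at_top"
proof (rule tendsto_sandwich[where f="\<lambda>_. 0" and h="\<lambda>x. 1 / (x - Eplus \<mu>) ^ Suc m"])
  show "eventually (\<lambda>x. 0 \<le> (cauchy_transform \<mu> (Suc m) :: real \<Rightarrow> real) x) at_top"
    using eventually_gt_at_top[of "Eplus \<mu>"]
    by eventually_elim (use cauchy_transform_pos[OF assms] in \<open>auto intro: less_imp_le\<close>)
  show "eventually (\<lambda>x. (cauchy_transform \<mu> (Suc m) :: real \<Rightarrow> real) x \<le> 1 / (x - Eplus \<mu>) ^ Suc m) at_top"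
    using eventually_gt_at_top[of "Eplus \<mu>"] by eventually_elim (rule cauchy_transform_bounds(2)[OF assms])
  show "((\<lambda>x. 1 / (x - Eplus \<mu>) ^ Suc m) \<longlongrightarrow> 0) at_top" by real_asymp
qed simp

lemma norm_higher_deriv_cauchy_transform:
  assumes "in_M \<nu>" "x > Eplus \<nu>"
  shows "norm ((deriv ^^ k) (cauchy_transform \<nu> 1) (complex_of_real x)) = fact k * cauchy_transform \<nu> (Suc k) x"
proof -
  have "(deriv ^^ k) (cauchy_transform \<nu> 1) w = (-1) ^ k * fact k * cauchy_transform \<nu> (Suc k) w"
    if "w \<notin> supp_hull \<nu>" for w :: complex
    using that
  proof (induction k arbitrary: w)
    case (Suc k)
    have "eventually (\<lambda>u. (deriv ^^ k) (cauchy_transform \<nu> 1) u = (-1) ^ k * fact k * cauchy_transform \<nu> (Suc k) u) (nhds w)"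
      using Suc by (intro eventually_nhds_in_open[OF open_Compl_supp_hull, THEN eventually_mono]) auto
    then have "(deriv ^^ Suc k) (cauchy_transform \<nu> 1) w = deriv (\<lambda>u. (-1) ^ k * fact k * cauchy_transform \<nu> (Suc k) u) w"
      by (simp add: deriv_cong_ev)
    also have "\<dots> = (-1) ^ k * fact k * (- of_nat (Suc k) * cauchy_transform \<nu> (Suc (Suc k)) w)"
      by (intro DERIV_imp_deriv DERIV_cmult cauchy_transform_has_field_derivative assms(1) Suc.prems)
    finally show ?case by (simp add: algebra_simps)
  qed simp
  then show ?thesis
    using of_real_notin_supp_hull[where 'a=complex, OF assms(2)] cauchy_transform_pos[OF assms]
    by (simp add: cauchy_transform_of_real norm_mult norm_power abs_of_pos)
qed

lemma cauchy_transform_ge_measure_ball: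
  assumes "in_M \<nu>" "x > Eplus \<nu>" "\<delta> > 0"
  shows "measure \<nu> (ball (Eplus \<nu>) \<delta>) / (x - Eplus \<nu> + \<delta>) ^ m \<le> cauchy_transform \<nu> m x"
proof -
  interpret prob_space \<nu> using in_M_D(1)[OF assms(1)] .
  have sets: "sets \<nu> = sets borel" using in_M_D(2)[OF assms(1)] .
  let ?c = "1 / (x - Eplus \<nu> + \<delta>) ^ m"
  have "(LINT t|\<nu>. ?c * indicator (ball (Eplus \<nu>) \<delta>) t) \<le> (LINT t|\<nu>. 1 / (x - t) ^ m)"
  proof (rule integral_mono_AE)
    show "integrable \<nu> (\<lambda>t. ?c * indicator (ball (Eplus \<nu>) \<delta>) t)"
      by (intro integrable_mult_right integrable_real_indicator) (auto simp: sets less_top[symmetric])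
    show "integrable \<nu> (\<lambda>t. 1 / (x - t) ^ m)" by (rule integrable_cauchy_kernel_real[OF assms(1,2)])
    show "AE t in \<nu>. ?c * indicator (ball (Eplus \<nu>) \<delta>) t \<le> 1 / (x - t) ^ m"
      using AE_less_if_Eplus_less[OF assms(1,2)]
    proof eventually_elim
      case (elim t)
      show ?case
      proof (cases "t \<in> ball (Eplus \<nu>) \<delta>")
        case True
        then have "x - t \<le> x - Eplus \<nu> + \<delta>" by (auto simp: dist_real_def)
        then show ?thesis using True elim by (auto intro!: frac_le power_mono)
      qed (use elim in simp)
    qed
  qed
  then show ?thesis by (simp add: cauchy_transform_real in_M_D(3)[OF assms(1)])
qed

lemma holomorphic_eq_on_real_interval:
  assumes "f holomorphic_on S" "g holomorphic_on S" "open S" "connected S"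
    and "a < b" "complex_of_real ` {a..b} \<subseteq> S"
    and "\<And>x. a \<le> x \<Longrightarrow> x \<le> b \<Longrightarrow> f (of_real x) = g (of_real x)"
    and "w \<in> S"
  shows "f w = g w"
proof -
  have "complex_of_real a islimpt complex_of_real ` {a..b}"
  proof (rule islimpt_isCont_image)
    show "a islimpt {a..b}" using assms(5) by simp
    show "eventually (\<lambda>y. complex_of_real y \<noteq> complex_of_real a) (at a)"
      unfolding eventually_at_topological by (intro exI[of _ UNIV]) simp
  qed (intro continuous_intros)
  then have "f w - g w = 0"
  proof (rule analytic_continuation[OF _ assms(3,4,6) _ _ _ assms(8), rotated 2])
    show "(\<lambda>w. f w - g w) holomorphic_on S" using assms(1,2) by (intro holomorphic_intros)
    show "complex_of_real a \<in> S" using assms(5,6) by auto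
  qed (use assms(7) in auto)
  then show ?thesis by simp
qed

text \<open>The Taylor coefficients of \<open>G\<^sub>\<nu>\<close> at \<open>x > E\<^sub>+\<close> grow at least like
  \<open>(x - E\<^sub>+ + \<delta>)\<^sup>-\<^sup>k\<close> for every \<open>\<delta> > 0\<close>, because \<open>\<nu>\<close> charges every neighbourhood of \<open>E\<^sub>+\<close>;
  so no Cauchy estimate with a radius beyond \<open>x - E\<^sub>+\<close> can hold.\<close>
lemma cauchy_transform_higher_deriv_unbounded:
  assumes \<nu>: "in_M \<nu>" and x: "x > Eplus \<nu>" and R: "R > x - Eplus \<nu>"
    and bound: "\<And>k. norm ((deriv ^^ k) (cauchy_transform \<nu> 1) (complex_of_real x)) \<le> fact k * M / R ^ k"
  shows False
proof -
  interpret prob_space \<nu> using in_M_D(1)[OF \<nu>] .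
  define \<delta> where "\<delta> = (R - (x - Eplus \<nu>)) / 2"
  define \<rho> where "\<rho> = x - Eplus \<nu> + \<delta>"
  define c where "c = measure \<nu> (ball (Eplus \<nu>) \<delta>) / \<rho>"
  have \<delta>: "\<delta> > 0" and \<rho>: "\<rho> > 0" "R / \<rho> > 1" using x R by (simp_all add: \<delta>_def \<rho>_def field_simps)
  have "emeasure \<nu> (ball (Eplus \<nu>) \<delta>) > 0" using Eplus_in_supp[OF \<nu>] \<delta> unfolding supp_def by simp
  then have c: "c > 0" using \<rho> by (simp add: c_def emeasure_eq_measure)
  have growth: "c * (R / \<rho>) ^ k \<le> M" for k
  proof -
    have "fact k * (c / \<rho> ^ k) \<le> fact k * cauchy_transform \<nu> (Suc k) x"
      using cauchy_transform_ge_measure_ball[OF \<nu> x \<delta>, of "Suc k"]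
      by (intro mult_left_mono) (simp_all add: c_def \<rho>_def)
    also have "\<dots> = norm ((deriv ^^ k) (cauchy_transform \<nu> 1) (complex_of_real x))"
      by (rule norm_higher_deriv_cauchy_transform[OF \<nu> x, symmetric])
    also have "\<dots> \<le> fact k * (M / R ^ k)"
      using bound[of k] by (simp only: times_divide_eq_right)
    finally have "c / \<rho> ^ k \<le> M / R ^ k"
      by (simp only: mult_le_cancel_left_pos[OF fact_gt_zero])
    moreover have "R ^ k > 0" using R x by (intro zero_less_power) linarith
    ultimately have "c / \<rho> ^ k * R ^ k \<le> M" by (simp only: pos_le_divide_eq)
    then show ?thesis by (simp add: power_divide)
  qed
  obtain k where "M / c < (R / \<rho>) ^ k" using real_arch_pow[OF \<rho>(2)] by blast
  then show False using growth[of k] c by (simp add: pos_divide_less_eq mult.commute)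
qed

lemma eventually_eq_cauchy_transform:
  assumes \<nu>: "in_M \<nu>" and \<rho>: "0 < \<rho>" "\<rho> \<le> x - Eplus \<nu>"
    and F: "F holomorphic_on ball (complex_of_real x) \<rho>"
    and agree: "\<And>t. x \<le> t \<Longrightarrow> t < x + \<rho> \<Longrightarrow> F (of_real t) = cauchy_transform \<nu> 1 (of_real t)"
  shows "eventually (\<lambda>w. F w = cauchy_transform \<nu> 1 w) (nhds (complex_of_real x))"
proof -
  define B where "B = ball (complex_of_real x) \<rho>"
  have B_hull: "B \<subseteq> - supp_hull \<nu>"
  proof
    fix w assume w: "w \<in> B"
    show "w \<in> - supp_hull \<nu>"
    proof
      assume "w \<in> supp_hull \<nu>"
      then obtain t where t: "t \<le> Eplus \<nu>" "w = of_real t" by (auto simp: supp_hull_def)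
      then have "dist x t < \<rho>" using w by (simp add: B_def dist_of_real)
      then show False using t \<rho> by (simp add: dist_real_def)
    qed
  qed
  have "F w = cauchy_transform \<nu> 1 w" if "w \<in> B" for w
  proof (rule holomorphic_eq_on_real_interval[where f=F and g="cauchy_transform \<nu> 1" and S=B and a=x and b="x + \<rho>/2"])
    show "F holomorphic_on B" using F by (simp add: B_def)
    show "cauchy_transform \<nu> 1 holomorphic_on B"
      using holomorphic_cauchy_transform[OF \<nu>] B_hull by (rule holomorphic_on_subset)
    show "open B" "connected B" by (simp_all add: B_def)
    show "x < x + \<rho>/2" using \<rho>(1) by simp
    show "complex_of_real ` {x..x + \<rho>/2} \<subseteq> B"
      using \<rho>(1) by (auto simp: B_def dist_of_real dist_real_def)
    show "F (of_real t) = cauchy_transform \<nu> 1 (of_real t)" if "x \<le> t" "t \<le> x + \<rho>/2" for t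
      using that \<rho>(1) by (intro agree) auto
    show "w \<in> B" by (rule that)
  qed
  then show ?thesis
    using \<rho>(1) by (intro eventually_nhds_in_open[of B, THEN eventually_mono]) (auto simp: B_def)
qed

text \<open>\<open>E\<^sub>+\<close> is a singularity of \<open>G\<^sub>\<nu>\<close>: a holomorphic continuation to a disc of radius \<open>r\<close>
  around \<open>E\<^sub>+\<close> would give Cauchy estimates with radius \<open>r/2\<close> at \<open>E\<^sub>+ + r/4\<close>.\<close>
lemma cauchy_transform_singular_at_Eplus:
  assumes \<nu>: "in_M \<nu>"
    and W: "open W" "complex_of_real (Eplus \<nu>) \<in> W" and F: "F holomorphic_on W"
    and d: "d > 0"
    and agree: "\<And>x. Eplus \<nu> < x \<Longrightarrow> x < Eplus \<nu> + d \<Longrightarrow> F (of_real x) = cauchy_transform \<nu> 1 (of_real x)"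
  shows False
proof -
  define e where "e = Eplus \<nu>"
  obtain r1 where r1: "r1 > 0" "cball (complex_of_real e) r1 \<subseteq> W"
    using W unfolding e_def by (meson open_contains_cball)
  define r where "r = min r1 d"
  have r: "r > 0" "r \<le> d" "cball (complex_of_real e) r \<subseteq> W"
    using r1 d by (auto simp: r_def)
  define x0 where "x0 = e + r / 4"
  define z0 where "z0 = complex_of_real x0"
  have x0: "x0 > Eplus \<nu>" using r(1) by (simp add: x0_def e_def)
  have "cball z0 (r/2) \<subseteq> cball (complex_of_real e) r"
  proof
    fix w assume "w \<in> cball z0 (r/2)"
    moreover have "dist (complex_of_real e) z0 = r/4"
      using r(1) unfolding z0_def dist_of_real by (simp add: x0_def dist_real_def)
    ultimately show "w \<in> cball (complex_of_real e) r"
      using dist_triangle[of "complex_of_real e" w z0] r(1) by simp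
  qed
  then have z0_W: "cball z0 (r/2) \<subseteq> W" using r(3) by blast
  then have "compact (F ` cball z0 (r/2))"
    by (intro compact_continuous_image holomorphic_on_imp_continuous_on holomorphic_on_subset[OF F]) auto
  then have "bounded (F ` cball z0 (r/2))" by (rule compact_imp_bounded)
  then obtain M where "\<forall>y \<in> F ` cball z0 (r/2). norm y \<le> M" unfolding bounded_iff by blast
  then have M: "\<And>w. w \<in> cball z0 (r/2) \<Longrightarrow> norm (F w) \<le> M" by blast
  have F_ball: "F holomorphic_on ball z0 (r/2)" using F z0_W ball_subset_cball by (blast intro: holomorphic_on_subset)
  have "eventually (\<lambda>w. F w = cauchy_transform \<nu> 1 w) (nhds z0)"
    unfolding z0_def
  proof (rule eventually_eq_cauchy_transform[OF \<nu>, of "r/4"])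
    show "F holomorphic_on ball (complex_of_real x0) (r/4)"
      using F_ball r(1) by (auto simp: z0_def elim!: holomorphic_on_subset)
    show "F (of_real t) = cauchy_transform \<nu> 1 (of_real t)" if "x0 \<le> t" "t < x0 + r/4" for t
      using that r by (intro agree) (auto simp: x0_def e_def)
  qed (use r(1) in \<open>simp_all add: x0_def e_def\<close>)
  then have F_derivs: "(deriv ^^ k) F z0 = (deriv ^^ k) (cauchy_transform \<nu> 1) z0" for k
    by (rule higher_deriv_cong_ev[OF _ refl])
  have "norm ((deriv ^^ k) (cauchy_transform \<nu> 1) (complex_of_real x0)) \<le> fact k * M / (r/2) ^ k" for k
    unfolding z0_def[symmetric] F_derivs[symmetric]
  proof (rule Cauchy_inequality[OF F_ball])
    show "continuous_on (cball z0 (r/2)) F"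
      by (rule holomorphic_on_imp_continuous_on[OF holomorphic_on_subset[OF F z0_W]])
    show "norm (F w) \<le> M" if "norm (z0 - w) = r/2" for w
      using that by (intro M) (simp add: dist_norm)
  qed (use r(1) in simp)
  moreover have "r/2 > x0 - Eplus \<nu>" using r(1) by (simp add: x0_def e_def)
  ultimately show False by (rule cauchy_transform_higher_deriv_unbounded[OF \<nu> x0, rotated])
qed

section \<open>The critical point of A\<close>

lemma difference_quotient_tendsto_at_right:
  assumes "(f has_real_derivative D) (at x)"
  shows "((\<lambda>y. (f y - f x) / (y - x)) \<longlongrightarrow> D) (at_right x)"
  using assms unfolding has_field_derivative_iff by (simp add: filterlim_at_split)

lemma decreasing_tendsto_SUP_at_right:
  fixes f :: "real \<Rightarrow> real"
  assumes dec: "\<And>x y. c < x \<Longrightarrow> x < y \<Longrightarrow> f y \<le> f x"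
  shows "((\<lambda>x. ereal (f x)) \<longlongrightarrow> (SUP x\<in>{c<..}. ereal (f x))) (at_right c)"
proof (rule order_tendstoI)
  fix a assume "a < (SUP x\<in>{c<..}. ereal (f x))"
  then obtain x0 where x0: "x0 > c" "a < ereal (f x0)" by (auto simp: less_SUP_iff)
  show "eventually (\<lambda>x. a < ereal (f x)) (at_right c)"
    unfolding eventually_at_right_field
    by (rule exI[of _ x0]) (use x0 dec in \<open>auto intro: less_le_trans\<close>)
next
  fix a assume a: "(SUP x\<in>{c<..}. ereal (f x)) < a"
  show "eventually (\<lambda>x. ereal (f x) < a) (at_right c)"
    unfolding eventually_at_right_field
  proof (rule exI[of _ "c+1"], intro conjI allI impI)
    fix y assume "c < y" "y < c + 1"
    then have "ereal (f y) \<le> (SUP x\<in>{c<..}. ereal (f x))" by (intro SUP_upper) auto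
    then show "ereal (f y) < a" using a by auto
  qed simp
qed

locale Afun_setting =
  fixes \<mu> :: "real measure" and n :: nat
  assumes in_M_mu: "in_M \<mu>" and not_point_mass: "\<not> (\<exists>a. \<mu> = return borel a)"
    and n_ge_1: "n \<ge> 1" and tau_le_n: "real n \<ge> tau \<mu>"
begin

abbreviation "Ep \<equiv> Eplus \<mu>"
abbreviation "Em \<equiv> Eminus \<mu>"
abbreviation G :: "real \<Rightarrow> real" where "G \<equiv> cauchy_transform \<mu> 1"
abbreviation G2 :: "real \<Rightarrow> real" where "G2 \<equiv> cauchy_transform \<mu> 2"
abbreviation G3 :: "real \<Rightarrow> real" where "G3 \<equiv> cauchy_transform \<mu> 3"

definition p :: "real \<Rightarrow> real" where "p y = real n * (G y)^2 - (real n - 1) * G2 y"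

lemma Em_less_Ep: "Em < Ep" by (rule Eminus_less_Eplus[OF in_M_mu not_point_mass])

lemma Ep_less_xpt: "xpt \<mu> > Ep" using Em_less_Ep by (simp add: xpt_def)

lemma G_pos: "y > Ep \<Longrightarrow> G y > 0" and G2_pos: "y > Ep \<Longrightarrow> G2 y > 0"
  using cauchy_transform_pos[OF in_M_mu] by auto

lemma G_deriv: "y > Ep \<Longrightarrow> (G has_real_derivative - G2 y) (at y)"
  using cauchy_transform_has_real_derivative[OF in_M_mu, of y 1] by (simp add: numeral_2_eq_2)

lemma G2_deriv: "y > Ep \<Longrightarrow> (G2 has_real_derivative - 2 * G3 y) (at y)"
  using cauchy_transform_has_real_derivative[OF in_M_mu, of y 2] by (simp add: numeral_3_eq_3 numeral_2_eq_2)

lemma G_decreasing: "Ep < x \<Longrightarrow> x < y \<Longrightarrow> G y < G x"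
  using cauchy_transform_strict_decreasing[OF in_M_mu, of x y 0] by simp

lemma G_sq_less: "y > Ep \<Longrightarrow> (G y)\<^sup>2 < G2 y"
  using cauchy_transform_sq_less[OF in_M_mu not_point_mass, of y 0]
  by (simp add: cauchy_transform_0[OF in_M_mu] numeral_2_eq_2)

lemma G2_sq_less: "y > Ep \<Longrightarrow> (G2 y)\<^sup>2 < G y * G3 y"
  using cauchy_transform_sq_less[OF in_M_mu not_point_mass, of y 1] by (simp add: numeral_2_eq_2 numeral_3_eq_3)

lemma G_cont: "y > Ep \<Longrightarrow> isCont G y" and G2_cont: "y > Ep \<Longrightarrow> isCont G2 y"
  using isCont_cauchy_transform[OF in_M_mu] by auto

lemma p_cont: "y > Ep \<Longrightarrow> isCont p y"
  unfolding p_def[abs_def] using G_cont G2_cont by (auto intro!: continuous_intros)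

lemma p_xpt_nonpos: "p (xpt \<mu>) \<le> 0"
proof -
  let ?x = "xpt \<mu>"
  have x: "?x > Ep" by (rule Ep_less_xpt)
  have d: "deriv (Gr \<mu>) ?x = - G2 ?x" unfolding Gr_eq_cauchy_transform using G_deriv[OF x] by (rule DERIV_imp_deriv)
  have cs: "(G ?x)^2 < G2 ?x" by (rule G_sq_less[OF x])
  have g2: "G2 ?x > 0" by (rule G2_pos[OF x])
  define q where "q = 1 - (G ?x)^2 / G2 ?x"
  have q: "q > 0" unfolding q_def using cs g2 by (simp add: field_simps)
  have "tau \<mu> = inverse q" unfolding tau_def q_def d by (simp add: Gr_cauchy_transform)
  then have "real n \<ge> inverse q" using tau_le_n by simp
  then have "real n * q \<ge> 1" using q by (simp add: field_simps)
  then have "real n * (G2 ?x - (G ?x)^2) \<ge> G2 ?x" using g2 unfolding q_def by (simp add: field_simps)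
  then show ?thesis unfolding p_def by (simp add: algebra_simps)
qed

lemma p_pos_far: "y \<ge> Ep + 2 * real n * (Ep - Em) + 1 \<Longrightarrow> p y > 0"
proof -
  assume y: "y \<ge> Ep + 2 * real n * (Ep - Em) + 1"
  define d where "d = Ep - Em"
  define u where "u = y - Ep"
  have d: "d > 0" using Em_less_Ep by (simp add: d_def)
  have n0: "real n \<ge> 1" using n_ge_1 by simp
  have u: "u \<ge> 2 * real n * d + 1" using y by (simp add: u_def d_def)
  have u0: "u > 0" using u d n0 by (smt (verit) mult_nonneg_nonneg)
  have yEp: "y > Ep" using u0 by (simp add: u_def)
  have key: "real n * u^2 > (real n - 1) * (u + d)^2"
  proof -
    have ug: "u \<ge> 2 * real n * d" using u by simp
    have h1: "u * u \<ge> u * (2 * real n * d + 1)" using u u0 by (intro mult_left_mono) auto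
    have h2: "d * u \<ge> d * (2 * real n * d)" using ug d by (intro mult_left_mono) auto
    have h3: "real n * (d * d) \<ge> 0" by simp
    have e1: "(real n - 1) * (u + d)^2 = real n * (u*u) + 2 * (real n * (d * u)) + real n * (d*d) - u*u - 2*(d*u) - d*d"
      by (simp add: power2_eq_square algebra_simps)
    have e2: "u * (2 * real n * d + 1) = 2 * (real n * (d * u)) + u" by (simp add: algebra_simps)
    have e3: "d * (2 * real n * d) = 2 * (real n * (d * d))" by (simp add: algebra_simps)
    have "d * d > 0" using d by simp
    then show ?thesis unfolding e1 using h1 h2 h3 u0 unfolding e2 e3 by (simp only: power2_eq_square)
  qed
  have b1: "G y \<ge> 1 / (u + d)" using cauchy_transform_bounds(1)[OF in_M_mu yEp, of 1] by (simp add: u_def d_def)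
  have b2: "G2 y \<le> 1 / u^2" using cauchy_transform_bounds(2)[OF in_M_mu yEp, of 2] by (simp add: u_def)
  have ud: "u + d > 0" using u0 d by simp
  have "(G y)^2 \<ge> (1 / (u + d))^2" using b1 ud by (intro power_mono) auto
  then have "(G y)^2 \<ge> 1 / (u+d)^2" by (simp add: power_one_over)
  then have "real n * (G y)^2 \<ge> real n * (1 / (u+d)^2)" by (rule mult_left_mono) simp
  then have "real n * (G y)^2 \<ge> real n / (u+d)^2" by simp
  moreover have "(real n - 1) * G2 y \<le> (real n - 1) * (1 / u^2)" using b2 n0 by (intro mult_left_mono) auto
  moreover have "real n / (u+d)^2 > (real n - 1) * (1 / u^2)"
    using key u0 ud by (simp add: field_simps)
  ultimately show "p y > 0" unfolding p_def by linarith
qed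


definition y_far :: real where "y_far = max (Ep + 2 * real n * (Ep - Em) + 1) (xpt \<mu>)"
definition p_nonpos_set :: "real set" where "p_nonpos_set = {y \<in> {xpt \<mu>..y_far}. p y \<le> 0}"
definition ystar :: real where "ystar = Sup p_nonpos_set"

lemma p_cont_on: "continuous_on {xpt \<mu>..y_far} p"
  using p_cont Ep_less_xpt by (intro continuous_at_imp_continuous_on) auto

lemma p_nonpos_set_props: "p_nonpos_set \<noteq> {}" "bdd_above p_nonpos_set" "closed p_nonpos_set"
proof -
  have "xpt \<mu> \<in> p_nonpos_set" using p_xpt_nonpos by (simp add: p_nonpos_set_def y_far_def)
  then show "p_nonpos_set \<noteq> {}" by auto
  show "bdd_above p_nonpos_set" unfolding p_nonpos_set_def by (rule bdd_aboveI[of _ y_far]) auto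
  show "closed p_nonpos_set" unfolding p_nonpos_set_def
    using continuous_on_closed_Collect_le[OF p_cont_on continuous_on_const[of _ 0]] by simp
qed

lemma ystar_in: "ystar \<in> p_nonpos_set" unfolding ystar_def using p_nonpos_set_props by (rule closed_contains_Sup)

lemma xpt_le_ystar: "ystar \<ge> xpt \<mu>" using ystar_in by (auto simp: p_nonpos_set_def)

lemma Ep_less_ystar: "ystar > Ep" using xpt_le_ystar Ep_less_xpt by simp

lemma p_pos_beyond_ystar: "y > ystar \<Longrightarrow> p y > 0"
proof -
  assume y: "y > ystar"
  show "p y > 0"
  proof (cases "y \<le> y_far")
    case True
    have "y \<notin> p_nonpos_set"
    proof
      assume "y \<in> p_nonpos_set"
      then have "y \<le> ystar" unfolding ystar_def using p_nonpos_set_props by (intro cSup_upper) auto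
      then show False using y by simp
    qed
    then show ?thesis using True y xpt_le_ystar by (auto simp: p_nonpos_set_def)
  next
    case False
    then show ?thesis by (intro p_pos_far) (auto simp: y_far_def)
  qed
qed

lemma p_ystar: "p ystar = 0"
proof -
  have "p ystar \<le> 0" using ystar_in by (simp add: p_nonpos_set_def)
  moreover have "p ystar \<ge> 0"
  proof (rule tendsto_lowerbound)
    show "(p \<longlongrightarrow> p ystar) (at_right ystar)"
      using p_cont[OF Ep_less_ystar] by (simp add: isCont_def filterlim_at_split)
    show "eventually (\<lambda>y. 0 \<le> p y) (at_right ystar)"
      unfolding eventually_at_right_field using p_pos_beyond_ystar by (intro exI[of _ "ystar+1"]) (auto intro: less_imp_le)
  qed simp
  ultimately show ?thesis by simp
qed

lemma G_inj: "x > Ep \<Longrightarrow> y > Ep \<Longrightarrow> G x = G y \<Longrightarrow> x = y"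
  using G_decreasing by (metis less_irrefl linorder_neqE_linordered_idom)

lemma Ginv_G: "y > Ep \<Longrightarrow> Ginv \<mu> (G y) = y"
  unfolding Ginv_def Gr_eq_cauchy_transform by (rule the_equality) (auto intro: G_inj)

lemma G_attains: 
  assumes "y1 > Ep" "0 < u" "u \<le> G y1"
  shows "\<exists>y\<ge>y1. G y = u"
proof -
  have "eventually (\<lambda>x. G x < u) at_top"
    using cauchy_transform_tendsto_0[OF in_M_mu, of 0] assms(2) by (simp add: order_tendsto_iff)
  then obtain b where b: "\<And>x. x \<ge> b \<Longrightarrow> G x < u" by (auto simp: eventually_at_top_linorder)
  define b' where "b' = max b y1"
  have "G b' \<le> u" using b[of b'] by (simp add: b'_def)
  then obtain x where "x \<ge> y1" "x \<le> b'" "G x = u"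
    using IVT2[of G b' u y1] assms G_cont by (auto simp: b'_def)
  then show ?thesis by blast
qed

lemma G_attains_between:
  assumes "Ep < y1" "y1 < y2" "G y2 < u" "u < G y1"
  shows "\<exists>y. y1 < y \<and> y < y2 \<and> G y = u"
proof -
  obtain x where "x \<ge> y1" "x \<le> y2" "G x = u"
    using IVT2[of G y2 u y1] assms G_cont by force
  then show ?thesis using assms by (metis less_eq_real_def less_irrefl)
qed

lemma isCont_Ginv: "y > Ep \<Longrightarrow> isCont (Ginv \<mu>) (G y)"
proof -
  assume y: "y > Ep"
  show ?thesis
  proof (rule isCont_inverse_function[where d="(y - Ep)/2" and f=G and x=y])
    show "0 < (y - Ep)/2" using y by simp
    fix z assume "\<bar>z - y\<bar> \<le> (y - Ep) / 2"
    then have z: "z > Ep" using y by (auto simp: abs_if split: if_splits)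
    show "Ginv \<mu> (G z) = z" by (rule Ginv_G[OF z])
    show "isCont G z" by (rule G_cont[OF z])
  qed
qed

lemma Ginv_has_real_derivative:
  assumes y: "y > Ep"
  shows "(Ginv \<mu> has_real_derivative inverse (- G2 y)) (at (G y))"
proof -
  define a where "a = (Ep + y) / 2"
  have a: "Ep < a" "a < y" using y by (auto simp: a_def)
  have "(G has_real_derivative - G2 y) (at (Ginv \<mu> (G y)))" using G_deriv[OF y] Ginv_G[OF y] by simp
  then show ?thesis
  proof (rule DERIV_inverse_function[where a="G (y+1)" and b="G a"])
    show "- G2 y \<noteq> 0" using G2_pos[OF y] by simp
    show "G (y + 1) < G y" "G y < G a" using G_decreasing a y by auto
    fix u assume u: "G (y + 1) < u" "u < G a"
    then obtain x where "a < x" "x < y + 1" "G x = u" using G_attains_between[of a "y+1" u] a y by auto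
    then show "G (Ginv \<mu> u) = u" using Ginv_G[of x] a by auto
  next
    show "isCont (Ginv \<mu>) (G y)" by (rule isCont_Ginv[OF y])
  qed
qed


definition zstar :: real where "zstar = G ystar"

lemma zstar_pos: "zstar > 0" unfolding zstar_def using G_pos Ep_less_ystar by simp

lemma Ginv_zstar: "Ginv \<mu> zstar = ystar" unfolding zstar_def using Ginv_G Ep_less_ystar by simp

definition Afun' :: "real \<Rightarrow> real" where
  "Afun' u = - real n / G2 (Ginv \<mu> u) - (1 - real n) / u\<^sup>2"

lemma Afun'_G: "y > Ep \<Longrightarrow> Afun' (G y) = - real n / G2 y - (1 - real n) / (G y)\<^sup>2"
  unfolding Afun'_def by (simp only: Ginv_G)

lemma Afun_has_real_derivative:
  assumes y: "y > Ep"
  shows "(Afun \<mu> n has_real_derivative Afun' (G y)) (at (G y))"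
  unfolding Afun_def[abs_def] Afun'_G[OF y]
  using Ginv_has_real_derivative[OF y] G_pos[OF y] G2_pos[OF y]
  by (auto intro!: derivative_eq_intros simp: field_simps power2_eq_square)

lemma deriv_Afun:
  assumes y: "y > Ep"
  shows "deriv (Afun \<mu> n) (G y) = - p y / (G2 y * (G y)\<^sup>2)"
proof -
  have "deriv (Afun \<mu> n) (G y) = - real n / G2 y - (1 - real n) / (G y)\<^sup>2"
    using DERIV_imp_deriv[OF Afun_has_real_derivative[OF y]] unfolding Afun'_G[OF y] .
  also have "\<dots> = - p y / (G2 y * (G y)\<^sup>2)"
    using G_pos[OF y] G2_pos[OF y] unfolding p_def by (simp add: field_simps)
  finally show ?thesis .
qed

lemma deriv_Afun_zstar: "deriv (Afun \<mu> n) zstar = 0"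
  unfolding zstar_def using deriv_Afun[OF Ep_less_ystar] p_ystar by simp

lemma deriv_Afun_nonzero_below_zstar: "0 < w \<Longrightarrow> w < zstar \<Longrightarrow> deriv (Afun \<mu> n) w \<noteq> 0"
proof -
  assume w: "0 < w" "w < zstar"
  then obtain y where y: "y \<ge> ystar" "G y = w" using G_attains[OF Ep_less_ystar, of w] by (auto simp: zstar_def)
  then have "y \<noteq> ystar" using w by (auto simp: zstar_def)
  then have y': "y > ystar" using y by simp
  then have yE: "y > Ep" using Ep_less_ystar by simp
  have "deriv (Afun \<mu> n) w = - p y / (G2 y * (G y)^2)" using deriv_Afun[OF yE] y by simp
  moreover have "p y > 0" by (rule p_pos_beyond_ystar[OF y'])
  ultimately show ?thesis using G_pos[OF yE] G2_pos[OF yE] by simp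
qed

lemma Afun'_has_real_derivative:
  "(Afun' has_real_derivative 2 * real n * G3 ystar / (G2 ystar)^3 + 2 * (1 - real n) / zstar^3) (at zstar)"
proof -
  have "(G2 has_real_derivative - 2 * G3 ystar) (at (Ginv \<mu> zstar))"
    using G2_deriv[OF Ep_less_ystar] by (simp add: Ginv_zstar)
  from DERIV_chain2[OF this Ginv_has_real_derivative[OF Ep_less_ystar, folded zstar_def]]
  have "((\<lambda>u. G2 (Ginv \<mu> u)) has_real_derivative 2 * G3 ystar / G2 ystar) (at zstar)"
    by (simp add: divide_inverse)
  then show ?thesis
    unfolding Afun'_def[abs_def] using zstar_pos G2_pos[OF Ep_less_ystar]
    by (auto intro!: derivative_eq_intros simp: Ginv_zstar field_simps power2_eq_square power3_eq_cube)
qed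

text \<open>At \<open>z\<^sup>*\<close> the relation \<open>p(y\<^sup>*) = 0\<close> turns \<open>A''(z\<^sup>*)\<close> into a positive multiple of
  \<open>G(y\<^sup>*) G\<^sub>3(y\<^sup>*) - G\<^sub>2(y\<^sup>*)\<^sup>2\<close>.\<close>
lemma deriv2_Afun_zstar_pos: "deriv (deriv (Afun \<mu> n)) zstar > 0"
proof -
  define a where "a = (Ep + ystar) / 2"
  have a: "Ep < a" "a < ystar" using Ep_less_ystar by (auto simp: a_def)
  have "eventually (\<lambda>u. deriv (Afun \<mu> n) u = Afun' u) (nhds zstar)"
  proof (rule eventually_nhds_in_open[of "{G (ystar+1)<..<G a}", THEN eventually_mono])
    show "open {G (ystar+1)<..<G a}" by simp
    show "zstar \<in> {G (ystar+1)<..<G a}" unfolding zstar_def using G_decreasing a Ep_less_ystar by auto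
    fix u assume "u \<in> {G (ystar+1)<..<G a}"
    then obtain y where "a < y" "y < ystar + 1" "G y = u" using G_attains_between[of a "ystar+1" u] a by auto
    then show "deriv (Afun \<mu> n) u = Afun' u" using DERIV_imp_deriv[OF Afun_has_real_derivative[of y]] a by auto
  qed
  then have "deriv (deriv (Afun \<mu> n)) zstar = 2 * real n * G3 ystar / (G2 ystar)^3 + 2 * (1 - real n) / zstar^3"
    using DERIV_imp_deriv[OF Afun'_has_real_derivative] by (simp add: deriv_cong_ev)
  also have "\<dots> = 2 * real n * (G3 ystar * zstar - (G2 ystar)\<^sup>2) / ((G2 ystar)^3 * zstar)"
  proof -
    have "real n * zstar\<^sup>2 = (real n - 1) * G2 ystar" using p_ystar unfolding p_def zstar_def by simp
    then have n: "1 - real n = - real n * zstar\<^sup>2 / G2 ystar" using G2_pos[OF Ep_less_ystar] by (simp add: field_simps)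
    show ?thesis
      unfolding n using G2_pos[OF Ep_less_ystar] zstar_pos by (simp add: field_simps power2_eq_square power3_eq_cube)
  qed
  also have "\<dots> > 0"
    using G2_sq_less[OF Ep_less_ystar] G2_pos[OF Ep_less_ystar] zstar_pos n_ge_1
    by (simp add: zstar_def mult.commute)
  finally show ?thesis .
qed

lemma GEp_eq_SUP: "GEp \<mu> = (SUP x\<in>{Ep<..}. ereal (G x))"
proof -
  have "((\<lambda>x. ereal (Gr \<mu> x)) \<longlongrightarrow> (SUP x\<in>{Ep<..}. ereal (G x))) (at_right Ep)"
    unfolding Gr_eq_cauchy_transform by (rule decreasing_tendsto_SUP_at_right) (use G_decreasing in \<open>auto intro: less_imp_le\<close>)
  then show ?thesis unfolding GEp_def by (intro tendsto_Lim) auto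
qed

lemma zstar_less_GEp: "ereal zstar < GEp \<mu>"
proof -
  define a where "a = (Ep + ystar) / 2"
  have a: "Ep < a" "a < ystar" using Ep_less_ystar by (auto simp: a_def)
  have "zstar < G a" unfolding zstar_def using G_decreasing a by auto
  also have "ereal (G a) \<le> (SUP x\<in>{Ep<..}. ereal (G x))" using a by (intro SUP_upper) auto
  finally show ?thesis unfolding GEp_eq_SUP by simp
qed

lemma Ginv_zstar_far: "Ginv \<mu> zstar - Ep \<ge> 4 * (Ep - Em)"
  using xpt_le_ystar unfolding Ginv_zstar by (simp add: xpt_def)


definition Phi :: "real \<Rightarrow> real" where "Phi y = real n * y + (1 - real n) / G y"

lemma Phi_has_real_derivative: "y > Ep \<Longrightarrow> (Phi has_real_derivative p y / (G y)^2) (at y)"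
proof -
  assume y: "y > Ep"
  have g: "G y \<noteq> 0" using G_pos[OF y] by simp
  have "(Phi has_real_derivative real n * 1 + (1 - real n) * (- (- G2 y * inverse (G y ^ Suc (Suc 0))))) (at y)"
    unfolding Phi_def[abs_def] divide_inverse
    by (intro DERIV_add DERIV_cmult DERIV_ident DERIV_inverse_fun G_deriv[OF y] g)
  moreover have "real n * 1 + (1 - real n) * (- (- G2 y * inverse (G y ^ Suc (Suc 0)))) = p y / (G y)^2"
    unfolding p_def using g by (simp add: field_simps power2_eq_square)
  ultimately show ?thesis by simp
qed

lemma isCont_Phi: "y > Ep \<Longrightarrow> isCont Phi y"
  using Phi_has_real_derivative DERIV_isCont by blast

lemma continuous_on_Phi: "Ep < a \<Longrightarrow> continuous_on {a..b} Phi"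
  using isCont_Phi by (intro continuous_at_imp_continuous_on) auto

lemma Phi_strict_mono: "ystar \<le> y1 \<Longrightarrow> y1 < y2 \<Longrightarrow> Phi y1 < Phi y2"
proof -
  assume y: "ystar \<le> y1" "y1 < y2"
  show "Phi y1 < Phi y2"
  proof (rule DERIV_pos_imp_increasing_open[OF y(2)])
    fix x assume x: "y1 < x" "x < y2"
    then have xs: "x > ystar" "x > Ep" using y Ep_less_ystar by auto
    show "\<exists>D. (Phi has_real_derivative D) (at x) \<and> 0 < D"
      using Phi_has_real_derivative[OF xs(2)] p_pos_beyond_ystar[OF xs(1)] G_pos[OF xs(2)] by auto
  next
    show "continuous_on {y1..y2} Phi" using y Ep_less_ystar by (intro continuous_on_Phi) auto
  qed
qed

lemma Phi_inj: "ystar \<le> y1 \<Longrightarrow> ystar \<le> y2 \<Longrightarrow> Phi y1 = Phi y2 \<Longrightarrow> y1 = y2"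
  using Phi_strict_mono by (metis less_irrefl linorder_neqE_linordered_idom)

lemma Phi_lower_bound: "y > Ep \<Longrightarrow> Phi y \<ge> y + (real n - 1) * Em"
proof -
  assume y: "y > Ep"
  have g: "G y \<ge> 1 / (y - Em)" using cauchy_transform_bounds(1)[OF in_M_mu y, of 1] by simp
  have yE: "y - Em > 0" using y Em_less_Ep by simp
  have "1 / G y \<le> y - Em" using g yE G_pos[OF y] by (simp add: field_simps)
  then have "(1 - real n) / G y \<ge> (1 - real n) * (y - Em)"
  proof -
    have "(1 - real n) * (y - Em) \<le> (1 - real n) * (1 / G y)"
      by (rule mult_left_mono_neg) (use \<open>1 / G y \<le> y - Em\<close> n_ge_1 in auto)
    then show ?thesis by simp
  qed
  then show ?thesis unfolding Phi_def by (simp add: algebra_simps)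
qed

definition astar :: real where "astar = Phi ystar"

lemma Phi_attains:
  assumes "x \<ge> astar" shows "\<exists>y\<ge>ystar. Phi y = x"
proof -
  define b where "b = max (ystar + 1) (x - (real n - 1) * Em)"
  have b: "b > Ep" "ystar \<le> b" using Ep_less_ystar by (auto simp: b_def)
  have "Phi b \<ge> x" using Phi_lower_bound[OF b(1)] by (simp add: b_def)
  then obtain y where "y \<ge> ystar" "y \<le> b" "Phi y = x"
    using IVT[of Phi ystar x b] assms b isCont_Phi Ep_less_ystar by (force simp: astar_def)
  then show ?thesis by blast
qed

definition Phi_inv :: "real \<Rightarrow> real" where "Phi_inv x = (THE y. ystar \<le> y \<and> Phi y = x)"

lemma Phi_Phi_inv: "x \<ge> astar \<Longrightarrow> ystar \<le> Phi_inv x \<and> Phi (Phi_inv x) = x"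
  unfolding Phi_inv_def using Phi_attains by (rule_tac theI') (auto intro: Phi_inj)

lemma Phi_inv_Phi: "ystar \<le> y \<Longrightarrow> Phi_inv (Phi y) = y"
  unfolding Phi_inv_def by (rule the_equality) (auto intro: Phi_inj)

lemma ystar_less_Phi_inv: "x > astar \<Longrightarrow> Phi_inv x > ystar"
  using Phi_Phi_inv[of x] unfolding astar_def by (metis less_eq_real_def less_irrefl)

lemma isCont_Phi_inv: "x > astar \<Longrightarrow> isCont Phi_inv x"
proof -
  assume x: "x > astar"
  define y where "y = Phi_inv x"
  have y: "y > ystar" "Phi y = x" using ystar_less_Phi_inv[OF x] Phi_Phi_inv[of x] x by (auto simp: y_def)
  have "isCont Phi_inv (Phi y)"
  proof (rule isCont_inverse_function[where d="(y - ystar)/2" and f=Phi and x=y])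
    show "0 < (y - ystar)/2" using y by simp
    fix z assume "\<bar>z - y\<bar> \<le> (y - ystar) / 2"
    then have z: "z > ystar" using y by (auto simp: abs_if split: if_splits)
    show "Phi_inv (Phi z) = z" using Phi_inv_Phi z by simp
    show "isCont Phi z" using isCont_Phi z Ep_less_ystar by simp
  qed
  then show ?thesis using y by simp
qed

lemma Phi_inv_tendsto_ystar: "(Phi_inv \<longlongrightarrow> ystar) (at_right astar)"
proof (rule order_tendstoI)
  fix c assume "c < ystar"
  show "eventually (\<lambda>x. c < Phi_inv x) (at_right astar)"
    unfolding eventually_at_right_field using ystar_less_Phi_inv \<open>c < ystar\<close>
    by (intro exI[of _ "astar+1"]) (auto intro: less_trans)
next
  fix c assume c: "ystar < c"
  show "eventually (\<lambda>x. Phi_inv x < c) (at_right astar)"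
    unfolding eventually_at_right_field
  proof (intro exI[of _ "Phi c"] conjI allI impI)
    show "astar < Phi c" unfolding astar_def using Phi_strict_mono c by simp
    fix x assume x: "astar < x" "x < Phi c"
    show "Phi_inv x < c"
    proof (rule ccontr)
      assume "\<not> Phi_inv x < c"
      then have "Phi c \<le> Phi (Phi_inv x)" using Phi_strict_mono[of c "Phi_inv x"] c by (cases "c = Phi_inv x") auto
      then show False using x Phi_Phi_inv[of x] by simp
    qed
  qed
qed

lemma Phi_inv_has_real_derivative:
  "x > astar \<Longrightarrow> (Phi_inv has_real_derivative inverse (p (Phi_inv x) / (G (Phi_inv x))^2)) (at x)"
proof -
  assume x: "x > astar"
  define y where "y = Phi_inv x"
  have y: "y > ystar" "Phi y = x" using ystar_less_Phi_inv[OF x] Phi_Phi_inv[of x] x by (auto simp: y_def)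
  have yE: "y > Ep" using y Ep_less_ystar by simp
  have "(Phi has_real_derivative p y / (G y)^2) (at (Phi_inv x))" using Phi_has_real_derivative[OF yE] by (simp add: y_def)
  then have "(Phi_inv has_real_derivative inverse (p y / (G y)^2)) (at x)"
  proof (rule DERIV_inverse_function[where a=astar and b="x+1"])
    show "p y / (G y)^2 \<noteq> 0" using p_pos_beyond_ystar[OF y(1)] G_pos[OF yE] by simp
    show "astar < x" "x < x + 1" using x by auto
    show "\<And>z. astar < z \<Longrightarrow> z < x + 1 \<Longrightarrow> Phi (Phi_inv z) = z" using Phi_Phi_inv by simp
    show "isCont Phi_inv x" by (rule isCont_Phi_inv[OF x])
  qed
  then show ?thesis by (simp add: y_def)
qed


lemma G_Phi_inv_tendsto: "((\<lambda>x. G (Phi_inv x)) \<longlongrightarrow> zstar) (at_right astar)"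
  unfolding zstar_def by (rule isCont_tendsto_compose[OF G_cont[OF Ep_less_ystar] Phi_inv_tendsto_ystar])

lemma Phi_tendsto_astar: "filterlim Phi (at_right astar) (at_right ystar)"
  unfolding filterlim_at
proof
  show "eventually (\<lambda>x. Phi x \<in> {astar<..} \<and> Phi x \<noteq> astar) (at_right ystar)"
    unfolding eventually_at_right_field astar_def using Phi_strict_mono[OF order_refl] by (intro exI[of _ "ystar+1"]) force
  show "(Phi \<longlongrightarrow> astar) (at_right ystar)"
    unfolding astar_def using isCont_Phi[OF Ep_less_ystar] by (simp add: isCont_def filterlim_at_split)
qed

lemma G_Phi_quotient_tendsto_at_bot:
  "filterlim (\<lambda>s. (G s - G ystar) / (Phi s - Phi ystar)) at_bot (at_right ystar)"
proof -
  define q1 where "q1 s = (G s - G ystar) / (s - ystar)" for s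
  define q2 where "q2 s = (Phi s - Phi ystar) / (s - ystar)" for s
  have q1: "(q1 \<longlongrightarrow> - G2 ystar) (at_right ystar)"
    unfolding q1_def by (rule difference_quotient_tendsto_at_right[OF G_deriv[OF Ep_less_ystar]])
  have q2: "(q2 \<longlongrightarrow> 0) (at_right ystar)"
    unfolding q2_def
    using difference_quotient_tendsto_at_right[OF Phi_has_real_derivative[OF Ep_less_ystar]] p_ystar by simp
  have q2_pos: "eventually (\<lambda>s. 0 < q2 s) (at_right ystar)"
    unfolding eventually_at_right_field q2_def using Phi_strict_mono[OF order_refl]
    by (intro exI[of _ "ystar+1"]) auto
  have "filterlim (\<lambda>s. q1 s * inverse (q2 s)) at_bot (at_right ystar)"
    by (rule filterlim_tendsto_neg_mult_at_bot[OF q1 _ filterlim_inverse_at_top[OF q2 q2_pos]])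
       (use G2_pos[OF Ep_less_ystar] in simp)
  moreover have "eventually (\<lambda>s. q1 s * inverse (q2 s) = (G s - G ystar) / (Phi s - Phi ystar)) (at_right ystar)"
    unfolding eventually_at_right_field
  proof (intro exI[of _ "ystar+1"] conjI allI impI)
    fix s assume "ystar < s"
    then have "(A / (s - ystar)) * inverse (B / (s - ystar)) = A / B" for A B :: real
      by (cases "B = 0") (simp_all add: field_simps)
    then show "q1 s * inverse (q2 s) = (G s - G ystar) / (Phi s - Phi ystar)"
      by (simp only: q1_def q2_def)
  qed simp
  ultimately show ?thesis by (rule filterlim_cong[OF refl refl, THEN iffD1, rotated])
qed
end

section \<open>Subordination and the right edge of the free convolution power\<close>

locale free_power_setting = Afun_setting +
  fixes \<nu> :: "real measure"
  assumes free_power: "is_free_conv_power \<mu> n \<nu>"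
begin

lemma in_M_nu: "in_M \<nu>" using free_power by (simp add: is_free_conv_power_def)

abbreviation "e \<equiv> Eplus \<nu>"
abbreviation H :: "real \<Rightarrow> real" where "H \<equiv> cauchy_transform \<nu> 1"
abbreviation GC :: "complex \<Rightarrow> complex" where "GC \<equiv> cauchy_transform \<mu> 1"
abbreviation HC :: "complex \<Rightarrow> complex" where "HC \<equiv> cauchy_transform \<nu> 1"

definition PhiC :: "complex \<Rightarrow> complex" where "PhiC w = of_nat n * w + (1 - of_nat n) / GC w"

lemma H_pos: "x > e \<Longrightarrow> H x > 0" using cauchy_transform_pos[OF in_M_nu] by simp

lemma subordination_eventually: "\<exists>T. \<forall>y\<ge>T. ystar < y \<and> e < Phi y \<and> H (Phi y) = G y"
proof -
  obtain R where R: "\<And>x. x > R \<Longrightarrow> real n * Ginv \<mu> (Gr \<nu> x) + (1 - real n) / Gr \<nu> x = x"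
    using free_power by (auto simp: is_free_conv_power_def)
  have "eventually (\<lambda>x. H x < zstar) at_top"
    using cauchy_transform_tendsto_0[OF in_M_nu, of 0] zstar_pos by (simp add: order_tendsto_iff)
  then obtain X1 where X1: "\<And>x. x \<ge> X1 \<Longrightarrow> H x < zstar" by (auto simp: eventually_at_top_linorder)
  define B where "B = max (max R e) X1 + 1"
  define T where "T = max (ystar + 1) (B - (real n - 1) * Em)"
  have "ystar < y \<and> e < Phi y \<and> H (Phi y) = G y" if y: "y \<ge> T" for y
  proof -
    have yys: "y > ystar" using y by (simp add: T_def)
    have yE: "y > Ep" using yys Ep_less_ystar by simp
    define x where "x = Phi y"
    have xB: "x \<ge> B" using Phi_lower_bound[OF yE] y by (simp add: x_def T_def)
    then have xR: "x > R" "x > e" "x \<ge> X1" by (auto simp: B_def)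
    have Hx: "0 < H x" "H x < zstar" using H_pos[OF xR(2)] X1[OF xR(3)] by auto
    then obtain y' where y': "y' \<ge> ystar" "G y' = H x" using G_attains[OF Ep_less_ystar, of "H x"] by (auto simp: zstar_def)
    have "y' \<noteq> ystar" using y' Hx by (auto simp: zstar_def)
    then have y'E: "y' > Ep" using y' Ep_less_ystar by simp
    have gi: "Ginv \<mu> (H x) = y'" using Ginv_G[OF y'E] y'(2) by metis
    have r: "real n * Ginv \<mu> (H x) + (1 - real n) / H x = x" using R[OF xR(1)] unfolding Gr_cauchy_transform .
    have "Phi y' = real n * y' + (1 - real n) / H x" unfolding Phi_def y'(2) ..
    then have "Phi y' = x" using r gi by simp
    then have "y' = y" using Phi_inj[of y' y] y' yys by (simp add: x_def)
    then show ?thesis using yys xR y' by (simp add: x_def)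
  qed
  then show ?thesis by blast
qed

definition V0 :: "complex set" where "V0 = - supp_hull \<mu> \<inter> GC -` (- {0})"
definition U :: "complex set" where "U = V0 \<inter> PhiC -` (- supp_hull \<nu>)"

lemma GC_holo: "GC holomorphic_on - supp_hull \<mu>" by (rule holomorphic_cauchy_transform[OF in_M_mu])
lemma HC_holo: "HC holomorphic_on - supp_hull \<nu>" by (rule holomorphic_cauchy_transform[OF in_M_nu])

lemma open_V0: "open V0"
  unfolding V0_def
  by (rule continuous_open_preimage[OF holomorphic_on_imp_continuous_on[OF GC_holo] open_Compl_supp_hull]) auto

lemma PhiC_holo: "PhiC holomorphic_on V0"
  unfolding PhiC_def[abs_def] by (intro holomorphic_intros holomorphic_on_subset[OF GC_holo]) (auto simp: V0_def)

lemma open_U: "open U"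
  unfolding U_def
  by (rule continuous_open_preimage[OF holomorphic_on_imp_continuous_on[OF PhiC_holo] open_V0 open_Compl_supp_hull])

lemma HC_PhiC_holo: "(\<lambda>w. HC (PhiC w)) holomorphic_on U"
  using holomorphic_on_compose_gen[OF holomorphic_on_subset[OF PhiC_holo] HC_holo, of U]
  by (auto simp: U_def o_def)

lemma PhiC_of_real: "PhiC (of_real y) = of_real (Phi y)"
  unfolding PhiC_def Phi_def cauchy_transform_of_real by simp

lemma of_real_in_U: "y > ystar \<Longrightarrow> Phi y > e \<Longrightarrow> complex_of_real y \<in> U"
proof -
  assume y: "y > ystar" "Phi y > e"
  have yE: "y > Ep" using y Ep_less_ystar by simp
  show ?thesis unfolding U_def V0_def
    using of_real_notin_supp_hull[OF yE] of_real_notin_supp_hull[OF y(2)] G_pos[OF yE]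
    by (auto simp: cauchy_transform_of_real PhiC_of_real)
qed

definition J :: "real set" where "J = {y. ystar < y \<and> e < Phi y}"

lemma is_interval_J: "is_interval J"
  unfolding is_interval_1
proof (intro ballI allI impI)
  fix a b x assume ab: "a \<in> J" "b \<in> J" "a \<le> x \<and> x \<le> b"
  then have a: "ystar < a" "e < Phi a" by (auto simp: J_def)
  have "Phi a \<le> Phi x" using Phi_strict_mono[of a x] a ab(3) by (cases "a = x") auto
  then show "x \<in> J" using a ab(3) by (auto simp: J_def)
qed

text \<open>The subordination identity \<open>G\<^sub>\<nu>(\<Phi>(y)) = G\<^sub>\<mu>(y)\<close> holds for large \<open>y\<close> by
  hypothesis; both sides continue holomorphically to the component of \<open>U\<close> containing
  the real interval \<open>J\<close>.\<close>
lemma subordination: "y > ystar \<Longrightarrow> Phi y > e \<Longrightarrow> H (Phi y) = G y"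
proof -
  assume y: "y > ystar" "Phi y > e"
  obtain T where T: "\<And>y. y \<ge> T \<Longrightarrow> ystar < y \<and> e < Phi y \<and> H (Phi y) = G y"
    using subordination_eventually by blast
  define S where "S = connected_component_set U (complex_of_real T)"
  have "T \<in> J" using T[of T] by (simp add: J_def)
  moreover have "connected (complex_of_real ` J)"
    by (intro connected_continuous_image is_interval_connected is_interval_J continuous_intros)
  moreover have "complex_of_real ` J \<subseteq> U" using of_real_in_U by (auto simp: J_def)
  ultimately have JS: "complex_of_real ` J \<subseteq> S"
    unfolding S_def by (intro connected_component_maximal) auto
  have "HC (PhiC (of_real y)) = GC (of_real y)"
  proof (rule holomorphic_eq_on_real_interval[where f="\<lambda>w. HC (PhiC w)" and g=GC and S=S and a=T and b="T + 1"])
    have "S \<subseteq> U" by (simp add: S_def connected_component_subset)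
    then show "(\<lambda>w. HC (PhiC w)) holomorphic_on S" "GC holomorphic_on S"
      using HC_PhiC_holo GC_holo by (auto simp: U_def V0_def elim!: holomorphic_on_subset)
    show "open S" unfolding S_def by (rule open_connected_component[OF open_U])
    show "connected S" unfolding S_def by simp
    show "complex_of_real ` {T..T + 1} \<subseteq> S" using JS T by (force simp: J_def)
    show "HC (PhiC (of_real x)) = GC (of_real x)" if "T \<le> x" "x \<le> T + 1" for x
      using T[OF that(1)] by (simp add: PhiC_of_real cauchy_transform_of_real)
    show "complex_of_real y \<in> S" using JS y by (auto simp: J_def)
  qed simp
  then show ?thesis by (simp add: PhiC_of_real cauchy_transform_of_real)
qed

lemma H_eq_G_Phi_inv: "x > astar \<Longrightarrow> x > e \<Longrightarrow> H x = G (Phi_inv x)"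
  using subordination[of "Phi_inv x"] Phi_Phi_inv[of x] ystar_less_Phi_inv[of x] by simp

text \<open>If \<open>E\<^sub>+(\<nu>) < a\<^sup>*\<close>, then \<open>G\<^sub>\<nu>\<close> is differentiable at \<open>a\<^sup>* = \<Phi>(y\<^sup>*)\<close>, yet along
  \<open>\<Phi>\<close> its difference quotients are those of \<open>G\<^sub>\<mu>\<close> divided by those of \<open>\<Phi>\<close>, and
  \<open>\<Phi>'(y\<^sup>*) = 0\<close>.\<close>
lemma not_Eplus_nu_less_astar: "e < astar \<Longrightarrow> False"
proof -
  assume ea: "e < astar"
  have Hd: "(H has_real_derivative - cauchy_transform \<nu> 2 astar) (at astar)"
    using cauchy_transform_has_real_derivative[OF in_M_nu ea, of 1] by (simp add: numeral_2_eq_2)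
  have H_astar: "H astar = zstar"
  proof -
    have "(H \<longlongrightarrow> H astar) (at_right astar)"
      using DERIV_isCont[OF Hd] by (simp add: isCont_def filterlim_at_split)
    moreover have "eventually (\<lambda>x. G (Phi_inv x) = H x) (at_right astar)"
      unfolding eventually_at_right_field using H_eq_G_Phi_inv ea by (intro exI[of _ "astar+1"]) auto
    then have "(H \<longlongrightarrow> zstar) (at_right astar)" using G_Phi_inv_tendsto by (rule Lim_transform_eventually[rotated])
    ultimately show ?thesis using tendsto_unique by (metis trivial_limit_at_right_real)
  qed
  define Q where "Q s = (H (Phi s) - H astar) / (Phi s - astar)" for s
  have "(Q \<longlongrightarrow> - cauchy_transform \<nu> 2 astar) (at_right ystar)"
    unfolding Q_def by (rule filterlim_compose[OF difference_quotient_tendsto_at_right[OF Hd] Phi_tendsto_astar])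
  moreover have "filterlim Q at_bot (at_right ystar)"
  proof (rule filterlim_cong[OF refl refl, THEN iffD1, OF _ G_Phi_quotient_tendsto_at_bot])
    show "eventually (\<lambda>s. (G s - G ystar) / (Phi s - Phi ystar) = Q s) (at_right ystar)"
      unfolding eventually_at_right_field
    proof (intro exI[of _ "ystar+1"] conjI allI impI)
      fix s assume s: "ystar < s" "s < ystar + 1"
      have "Phi s > astar" using Phi_strict_mono[OF order_refl, of s] s by (simp add: astar_def)
      then have "H (Phi s) = G s" using subordination[of s] s ea by simp
      then show "(G s - G ystar) / (Phi s - Phi ystar) = Q s"
        using H_astar unfolding Q_def zstar_def astar_def by simp
    qed simp
  qed
  then have "filterlim Q at_infinity (at_right ystar)"
    by (rule filterlim_mono[OF _ at_bot_le_at_infinity order_refl])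
  ultimately show False
    by (rule not_tendsto_and_filterlim_at_infinity[OF trivial_limit_at_right_real])
qed

lemma PhiC_has_field_derivative_of_real:
  assumes y: "y > Ep"
  shows "(PhiC has_field_derivative of_real (p y / (G y)\<^sup>2)) (at (of_real y))"
proof -
  let ?w = "complex_of_real y"
  have w: "?w \<notin> supp_hull \<mu>" by (rule of_real_notin_supp_hull[OF y])
  have g: "GC ?w \<noteq> 0" using G_pos[OF y] by (simp add: cauchy_transform_of_real)
  have GCd: "(GC has_field_derivative - cauchy_transform \<mu> 2 ?w) (at ?w)"
    using cauchy_transform_has_field_derivative[OF in_M_mu w, of 1] by (simp add: numeral_2_eq_2)
  have "(PhiC has_field_derivative of_nat n + (1 - of_nat n) * cauchy_transform \<mu> 2 ?w / (GC ?w)\<^sup>2) (at ?w)"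
    unfolding PhiC_def[abs_def] using GCd g
    by (auto intro!: derivative_eq_intros simp: field_simps power2_eq_square)
  then show ?thesis
    using G_pos[OF y] by (simp add: cauchy_transform_of_real p_def field_simps power2_eq_square)
qed

text \<open>If \<open>a\<^sup>* < E\<^sub>+(\<nu>)\<close>, then \<open>\<Phi>\<close> is locally biholomorphic near \<open>\<Phi>\<^sup>-\<^sup>1(E\<^sub>+(\<nu>))\<close>, and
  \<open>G\<^sub>\<mu> \<circ> \<Phi>\<^sup>-\<^sup>1\<close> continues \<open>G\<^sub>\<nu>\<close> holomorphically across \<open>E\<^sub>+(\<nu>)\<close>.\<close>
lemma not_astar_less_Eplus_nu: "astar < e \<Longrightarrow> False"
proof -
  assume ea: "astar < e"
  define ye where "ye = Phi_inv e"
  have ye: "ye > ystar" "Phi ye = e" using ystar_less_Phi_inv[OF ea] Phi_Phi_inv[of e] ea by (auto simp: ye_def)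
  have ye_Ep: "ye > Ep" using ye Ep_less_ystar by simp
  define w0 where "w0 = complex_of_real ye"
  have w0_V0: "w0 \<in> V0"
    unfolding V0_def w0_def using of_real_notin_supp_hull[OF ye_Ep] G_pos[OF ye_Ep]
    by (simp add: cauchy_transform_of_real)
  have "deriv PhiC w0 \<noteq> 0"
    using DERIV_imp_deriv[OF PhiC_has_field_derivative_of_real[OF ye_Ep]] p_pos_beyond_ystar[OF ye(1)] G_pos[OF ye_Ep]
    by (simp add: w0_def)
  then obtain r0 where r0: "r0 > 0" "ball w0 r0 \<subseteq> V0" "inj_on PhiC (ball w0 r0)"
    using has_complex_derivative_locally_injective[OF PhiC_holo w0_V0 open_V0] by blast
  have PhiC_ball: "PhiC holomorphic_on ball w0 r0" using PhiC_holo r0(2) by (rule holomorphic_on_subset)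
  obtain g where g: "g holomorphic_on PhiC ` ball w0 r0" "\<And>z. z \<in> ball w0 r0 \<Longrightarrow> g (PhiC z) = z"
    using holomorphic_has_inverse[OF PhiC_ball open_ball r0(3)] by metis
  define W where "W = PhiC ` ball w0 r0"
  have "open W" unfolding W_def by (rule open_mapping_thm3[OF PhiC_ball open_ball r0(3)])
  moreover have "complex_of_real e \<in> W"
    unfolding W_def using r0(1) ye(2) by (intro image_eqI[of _ _ w0]) (simp_all add: w0_def PhiC_of_real)
  moreover have "(GC \<circ> g) holomorphic_on W"
  proof (rule holomorphic_on_compose_gen[OF g(1)[folded W_def] GC_holo])
    show "g ` W \<subseteq> - supp_hull \<mu>" using g(2) r0(2) by (auto simp: W_def V0_def)
  qed
  moreover obtain d where d: "d > 0" "\<And>x. dist x e < d \<Longrightarrow> dist (Phi_inv x) ye < r0"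
    using isCont_Phi_inv[OF ea] r0(1) unfolding continuous_at_eps_delta ye_def by blast
  moreover have "(GC \<circ> g) (of_real x) = HC (of_real x)" if "e < x" "x < e + d" for x
  proof -
    have x: "x > astar" using that ea by simp
    have "complex_of_real (Phi_inv x) \<in> ball w0 r0"
      using d(2)[of x] that by (simp add: w0_def dist_of_real dist_real_def dist_commute)
    moreover have "PhiC (of_real (Phi_inv x)) = of_real x" using Phi_Phi_inv[of x] x by (simp add: PhiC_of_real)
    ultimately have "g (of_real x) = of_real (Phi_inv x)" using g(2) by metis
    then show ?thesis using H_eq_G_Phi_inv[OF x that(1)] by (simp add: cauchy_transform_of_real)
  qed
  ultimately show False by (intro cauchy_transform_singular_at_Eplus[OF in_M_nu, of W "GC \<circ> g" d]) auto
qed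

lemma Eplus_nu_eq_astar: "e = astar"
  using not_Eplus_nu_less_astar not_astar_less_Eplus_nu by (meson linorder_neqE_linordered_idom)

lemma GEp_nu_eq_zstar: "GEp \<nu> = ereal zstar"
proof -
  note ea = Eplus_nu_eq_astar
  have "eventually (\<lambda>x. G (Phi_inv x) = Gr \<nu> x) (at_right e)"
    unfolding eventually_at_right_field using H_eq_G_Phi_inv ea
    by (intro exI[of _ "astar+1"]) (auto simp: Gr_cauchy_transform)
  then have "(Gr \<nu> \<longlongrightarrow> zstar) (at_right e)" using G_Phi_inv_tendsto ea by (simp add: Lim_transform_eventually[rotated])
  then have "((\<lambda>x. ereal (Gr \<nu> x)) \<longlongrightarrow> ereal zstar) (at_right e)" by (rule tendsto_ereal)
  then show ?thesis unfolding GEp_def by (intro tendsto_Lim) auto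
qed

lemma deriv_Gr_nu:
  assumes x: "x > astar"
  shows "deriv (Gr \<nu>) x = - (G2 (Phi_inv x) * (G (Phi_inv x))\<^sup>2) * inverse (p (Phi_inv x))"
proof -
  note ea = Eplus_nu_eq_astar
  have yE: "Phi_inv x > Ep" using ystar_less_Phi_inv[OF x] Ep_less_ystar by simp
  have ev: "eventually (\<lambda>u. Gr \<nu> u = G (Phi_inv u)) (nhds x)"
    by (rule eventually_nhds_in_open[of "{astar<..}", THEN eventually_mono])
       (use x ea H_eq_G_Phi_inv in \<open>auto simp: Gr_cauchy_transform\<close>)
  have "deriv (Gr \<nu>) x = deriv (\<lambda>u. G (Phi_inv u)) x" by (rule deriv_cong_ev[OF ev refl])
  also have "\<dots> = - G2 (Phi_inv x) * inverse (p (Phi_inv x) / (G (Phi_inv x))^2)"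
    by (rule DERIV_imp_deriv[OF DERIV_chain2[OF G_deriv[OF yE] Phi_inv_has_real_derivative[OF x]]])
  also have "\<dots> = - (G2 (Phi_inv x) * (G (Phi_inv x))^2) * inverse (p (Phi_inv x))"
    using G_pos[OF yE] by (simp add: field_simps)
  finally show ?thesis .
qed

lemma deriv_Gr_nu_tendsto_at_bot: "filterlim (\<lambda>x. deriv (Gr \<nu>) x) at_bot (at_right e)"
proof -
  note ea = Eplus_nu_eq_astar
  have c1: "((\<lambda>x. - (G2 (Phi_inv x) * (G (Phi_inv x))^2)) \<longlongrightarrow> - (G2 ystar * (G ystar)^2)) (at_right astar)"
    by (intro tendsto_intros isCont_tendsto_compose[OF G2_cont[OF Ep_less_ystar] Phi_inv_tendsto_ystar]
        isCont_tendsto_compose[OF G_cont[OF Ep_less_ystar] Phi_inv_tendsto_ystar])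
  have c2: "((\<lambda>x. p (Phi_inv x)) \<longlongrightarrow> 0) (at_right astar)"
    using isCont_tendsto_compose[OF p_cont[OF Ep_less_ystar] Phi_inv_tendsto_ystar] p_ystar by simp
  have c3: "eventually (\<lambda>x. 0 < p (Phi_inv x)) (at_right astar)"
    unfolding eventually_at_right_field using ystar_less_Phi_inv p_pos_beyond_ystar by (intro exI[of _ "astar+1"]) auto
  have lim: "filterlim (\<lambda>x. - (G2 (Phi_inv x) * (G (Phi_inv x))^2) * inverse (p (Phi_inv x))) at_bot (at_right astar)"
    by (rule filterlim_tendsto_neg_mult_at_bot[OF c1 _ filterlim_inverse_at_top[OF c2 c3]])
       (use G2_pos[OF Ep_less_ystar] G_pos[OF Ep_less_ystar] in simp)
  have ev: "eventually (\<lambda>x. - (G2 (Phi_inv x) * (G (Phi_inv x))^2) * inverse (p (Phi_inv x)) = deriv (Gr \<nu>) x) (at_right astar)"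
    unfolding eventually_at_right_field using deriv_Gr_nu by (intro exI[of _ "astar+1"]) auto
  show ?thesis using lim filterlim_cong[OF refl refl ev] ea by simp
qed

end

theorem proposition5p4:
  fixes \<mu> \<nu> :: "real measure" and n :: nat
  assumes "in_M \<mu>"
    and "\<not> (\<exists>a. \<mu> = return borel a)"
    and "n \<ge> 1" and "real n \<ge> tau \<mu>"
    and "is_free_conv_power \<mu> n \<nu>"
  shows "\<exists>z. 0 < z \<and> ereal z < GEp \<mu>
      \<and> deriv (Afun \<mu> n) z = 0
      \<and> (\<forall>w. 0 < w \<and> w < z \<longrightarrow> deriv (Afun \<mu> n) w \<noteq> 0)
      \<and> deriv (deriv (Afun \<mu> n)) z > 0
      \<and> Ginv \<mu> z - Eplus \<mu> \<ge> 4 * (Eplus \<mu> - Eminus \<mu>)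
      \<and> ereal z = GEp \<nu>
      \<and> filterlim (\<lambda>x. deriv (Gr \<nu>) x) at_bot (at_right (Eplus \<nu>))"
proof -
  interpret free_power_setting \<mu> n \<nu> using assms by unfold_locales auto
  show ?thesis
    by (intro exI[of _ zstar] conjI allI impI zstar_pos zstar_less_GEp deriv_Afun_zstar
        deriv_Afun_nonzero_below_zstar deriv2_Afun_zstar_pos Ginv_zstar_far GEp_nu_eq_zstar[symmetric]
        deriv_Gr_nu_tendsto_at_bot) auto
qed

end
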